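(* Let $R$ be a commutative ring with unit, let $\mathcal{P}$ be a filtered poset, and let $F\colon\mathcal{P}\to R\text{-mod}$ be a functor, regarded as a functor $\mathcal{P}\to\operatorname{Ch}(R)$ concentrated in degree $0$. Then $F$ is cofibrant in the model structure on $\operatorname{Fun}(\mathcal{P},\operatorname{Ch}(R))$ described below if and only if $F$ is pseudo-projective. Moreover, in this case $F$ is $\operatorname{colim}$-acyclic, i.e. $\operatorname{colim}_nF=0$ for all $n>0$, where $\operatorname{colim}_n$ denotes the $n$-th left derived functor of $\operatorname{colim}_{\mathcal{P}}\colon\operatorname{Fun}(\mathcal{P},R\text{-mod})\to R\text{-mod}$.
   Context: A filtered poset is a poset $\mathcal{P}$ equipped with a map $d\colon\mathcal{P}\to\mathbb{N}$ such that $d(i)<d(j)$ whenever $i<j$. $\operatorname{Ch}(R)$ is the category of unbounded chain complexes of $R$-modules with the injective model structure (weak equivalences the quasi-isomorphisms, cofibrations the monomorphisms). $\operatorname{Fun}(\mathcal{P},\operatorname{Ch}(R))$ carries the Reedy model structure obtained by regarding $\mathcal{P}$ as a Reedy category with direct part $\mathcal{P}$ and inverse part the discrete category on the objects of $\mathcal{P}$: weak equivalences and fibrations are objectwise; a natural transformation $\eta\colon F\Rightarrow G$ is a cofibration iff for each $i$ the latching map $F(i)\sqcup_{\operatorname{colim}_{\mathcal{P}_{<i}}F}\operatorname{colim}_{\mathcal{P}_{<i}}G\to G(i)$ is a cofibration. Notation: $\mathcal{P}_{<i}=\{j:j<i\}$, $\mathcal{P}_{\le i}=\{j:j\le i\}$;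 $F(j<i)$ is the image under $F$ of the arrow $j\to i$, with $F(i<i)=1_{F(i)}$; $\operatorname{Im}_F(j)=\sum_{k<j}\operatorname{Im}F(k<j)$; $\max J$ is the set of maximal elements of $J$. $F$ is pseudo-projective at $i$ if for every finite $J\subset\mathcal{P}_{\le i}$ and every $\oplus_{j\in J}x_j\in\bigoplus_{j\in J}F(j)$ with $\sum_{j\in J}F(j<i)(x_j)=0$, one has $x_j\in\operatorname{Im}_F(j)$ for all $j\in\max J$; $F$ is pseudo-projective if it is so at every $i$. *)

theory Defs
  imports Main "HOL.Modules"
begin

text \<open>
R-modules are realised as submodules (module.subspace) of an ambient R-module
given by a scalar multiplication s :: 'r => 'm => 'm on an abelian group 'm
(locale module from HOL.Modules).  A functor F : P -> R-mod on a poset P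
(the type 'p :: order) is a family of submodules S i together with maps
f i j : S i -> S j for i <= j (the image of the arrow i -> j) that are
R-linear, identities for i = i and compatible with composition.
\<close>

definition lin_on :: "('r::comm_ring_1 \<Rightarrow> 'a::ab_group_add \<Rightarrow> 'a) \<Rightarrow> ('r \<Rightarrow> 'b::ab_group_add \<Rightarrow> 'b)
    \<Rightarrow> 'a set \<Rightarrow> ('a \<Rightarrow> 'b) \<Rightarrow> bool" where
  "lin_on s1 s2 A g \<longleftrightarrow>
     (\<forall>x\<in>A. \<forall>y\<in>A. g (x + y) = g x + g y) \<and> (\<forall>c. \<forall>x\<in>A. g (s1 c x) = s2 c (g x))"

definition pmod :: "('r::comm_ring_1 \<Rightarrow> 'm::ab_group_add \<Rightarrow> 'm) \<Rightarrow> ('p::order \<Rightarrow> 'm set)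
    \<Rightarrow> ('p \<Rightarrow> 'p \<Rightarrow> 'm \<Rightarrow> 'm) \<Rightarrow> bool" where
  "pmod s S f \<longleftrightarrow> module s \<and> (\<forall>i. module.subspace s (S i)) \<and>
     (\<forall>i j. i \<le> j \<longrightarrow> lin_on s s (S i) (f i j) \<and> f i j ` S i \<subseteq> S j) \<and>
     (\<forall>i. \<forall>x\<in>S i. f i i x = x) \<and>
     (\<forall>i j k. i \<le> j \<longrightarrow> j \<le> k \<longrightarrow> (\<forall>x\<in>S i. f j k (f i j x) = f i k x))"

definition filtration :: "('p::order \<Rightarrow> nat) \<Rightarrow> bool" where
  "filtration d \<longleftrightarrow> (\<forall>i j. i < j \<longrightarrow> d i < d j)"

text \<open>Elements of the direct sum of the S j over j in A: finitely supported families.\<close>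
definition dsum :: "('p \<Rightarrow> 'm::zero set) \<Rightarrow> 'p set \<Rightarrow> ('p \<Rightarrow> 'm) set" where
  "dsum S A = {x. finite {j. x j \<noteq> 0} \<and> (\<forall>j. x j \<in> S j) \<and> (\<forall>j. x j \<noteq> 0 \<longrightarrow> j \<in> A)}"

text \<open>The submodule of relations defining the colimit over the full subposet A:
  colim_A F = (direct sum over A of F(j)) / colim_rel.  It consists of the finite sums of
  the generators  delta_k(a) - delta_j(F(k<j) a)  (k <= j in A, a in F(k));
  since each F(k) is a submodule and F(k<j) is linear, this is the submodule they span.\<close>
inductive_set colim_rel :: "('p::order \<Rightarrow> 'm::ab_group_add set) \<Rightarrow> ('p \<Rightarrow> 'p \<Rightarrow> 'm \<Rightarrow> 'm)
    \<Rightarrow> 'p set \<Rightarrow> ('p \<Rightarrow> 'm) set" for S f A where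
  zero: "(\<lambda>_. 0) \<in> colim_rel S f A"
| step: "x \<in> colim_rel S f A \<Longrightarrow> k \<in> A \<Longrightarrow> j \<in> A \<Longrightarrow> k \<le> j \<Longrightarrow> a \<in> S k \<Longrightarrow>
     (\<lambda>t. x t + (if t = k then a else 0) - (if t = j then f k j a else 0)) \<in> colim_rel S f A"

text \<open>The latching map colim_{P_{<i}} F -> F(i) is injective (a monomorphism): an element of
  the direct sum over P_{<i} mapped to 0 by the canonical cocone map lies in the relations.\<close>
definition latching_mono :: "('p::order \<Rightarrow> 'm::ab_group_add set) \<Rightarrow> ('p \<Rightarrow> 'p \<Rightarrow> 'm \<Rightarrow> 'm) \<Rightarrow> 'p \<Rightarrow> bool" where
  "latching_mono S f i \<longleftrightarrow>
     (\<forall>x\<in>dsum S {j. j < i}. (\<Sum>j\<in>{j. x j \<noteq> 0}. f j i (x j)) = 0 \<longrightarrow> x \<in> colim_rel S f {j. j < i})"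

text \<open>A functor P -> Ch(R) is given degreewise: C i n is the degree-n module of the complex at i,
  g i j n the degree-n component of the map for i <= j.  (Differentials play no role in the
  cofibrancy condition.)  Colimits in Ch(R) are computed degreewise, and cofibrations of Ch(R)
  (injective model structure) are the degreewise injective maps.  An object G is Reedy cofibrant
  iff 0 => G is a cofibration; since 0(i) + colim_{P<i} 0 colim_{P<i} G = colim_{P<i} G, this
  means that every latching map colim_{P<i} G -> G(i) is injective in every degree.\<close>
definition reedy_cofibrant :: "('p::order \<Rightarrow> int \<Rightarrow> 'm::ab_group_add set) \<Rightarrow> ('p \<Rightarrow> 'p \<Rightarrow> int \<Rightarrow> 'm \<Rightarrow> 'm) \<Rightarrow> bool" where
  "reedy_cofibrant C g \<longleftrightarrow> (\<forall>i n. latching_mono (\<lambda>j. C j n) (\<lambda>j k. g j k n) i)"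

definition deg0 :: "('p \<Rightarrow> 'm::zero set) \<Rightarrow> 'p \<Rightarrow> int \<Rightarrow> 'm set" where
  "deg0 S i n = (if n = 0 then S i else {0})"

definition deg0_map :: "('p \<Rightarrow> 'p \<Rightarrow> 'm \<Rightarrow> 'm) \<Rightarrow> 'p \<Rightarrow> 'p \<Rightarrow> int \<Rightarrow> 'm \<Rightarrow> 'm" where
  "deg0_map f i j n = f i j"

definition ImF :: "('p::order \<Rightarrow> 'm::ab_group_add set) \<Rightarrow> ('p \<Rightarrow> 'p \<Rightarrow> 'm \<Rightarrow> 'm) \<Rightarrow> 'p \<Rightarrow> 'm set" where
  "ImF S f j = {y. \<exists>K z. finite K \<and> K \<subseteq> {k. k < j} \<and> (\<forall>k\<in>K. z k \<in> S k) \<and> y = (\<Sum>k\<in>K. f k j (z k))}"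

definition maxs :: "'p::order set \<Rightarrow> 'p set" where
  "maxs J = {j \<in> J. \<not> (\<exists>k\<in>J. j < k)}"

definition pseudo_projective_at :: "('p::order \<Rightarrow> 'm::ab_group_add set) \<Rightarrow> ('p \<Rightarrow> 'p \<Rightarrow> 'm \<Rightarrow> 'm) \<Rightarrow> 'p \<Rightarrow> bool" where
  "pseudo_projective_at S f i \<longleftrightarrow>
     (\<forall>J x. finite J \<longrightarrow> J \<subseteq> {j. j \<le> i} \<longrightarrow> (\<forall>j\<in>J. x j \<in> S j) \<longrightarrow>
        (\<Sum>j\<in>J. f j i (x j)) = 0 \<longrightarrow> (\<forall>j\<in>maxs J. x j \<in> ImF S f j))"

definition pseudo_projective :: "('p::order \<Rightarrow> 'm::ab_group_add set) \<Rightarrow> ('p \<Rightarrow> 'p \<Rightarrow> 'm \<Rightarrow> 'm) \<Rightarrow> bool" where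
  "pseudo_projective S f \<longleftrightarrow> (\<forall>i. pseudo_projective_at S f i)"

text \<open>Free functors P -> R-mod: free on a P-graded set of generators X i \<subseteq> Q i, i.e.
  for every j the elements q i j x (i <= j, x in X i) are pairwise distinct (for distinct
  indices), linearly independent and span Q j.  Free functors are projective in Fun(P, R-mod).\<close>
definition free_pmod :: "('r::comm_ring_1 \<Rightarrow> 'q::ab_group_add \<Rightarrow> 'q) \<Rightarrow> ('p::order \<Rightarrow> 'q set)
    \<Rightarrow> ('p \<Rightarrow> 'p \<Rightarrow> 'q \<Rightarrow> 'q) \<Rightarrow> bool" where
  "free_pmod s Q q \<longleftrightarrow> pmod s Q q \<and> (\<exists>X. (\<forall>i. X i \<subseteq> Q i) \<and> (\<forall>j.
      inj_on (\<lambda>(i, x). q i j x) {(i, x). i \<le> j \<and> x \<in> X i} \<and>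
      \<not> module.dependent s ((\<lambda>(i, x). q i j x) ` {(i, x). i \<le> j \<and> x \<in> X i}) \<and>
      module.span s ((\<lambda>(i, x). q i j x) ` {(i, x). i \<le> j \<and> x \<in> X i}) = Q j))"

definition nat_trans :: "('r::comm_ring_1 \<Rightarrow> 'a::ab_group_add \<Rightarrow> 'a) \<Rightarrow> ('r \<Rightarrow> 'b::ab_group_add \<Rightarrow> 'b)
    \<Rightarrow> ('p::order \<Rightarrow> 'a set) \<Rightarrow> ('p \<Rightarrow> 'p \<Rightarrow> 'a \<Rightarrow> 'a) \<Rightarrow> ('p \<Rightarrow> 'b set) \<Rightarrow> ('p \<Rightarrow> 'p \<Rightarrow> 'b \<Rightarrow> 'b)
    \<Rightarrow> ('p \<Rightarrow> 'a \<Rightarrow> 'b) \<Rightarrow> bool" where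
  "nat_trans s1 s2 A a B b eta \<longleftrightarrow>
     (\<forall>i. lin_on s1 s2 (A i) (eta i) \<and> eta i ` A i \<subseteq> B i) \<and>
     (\<forall>i j. i \<le> j \<longrightarrow> (\<forall>x\<in>A i. eta j (a i j x) = b i j (eta i x)))"

text \<open>A free (hence projective) resolution
  ... -> Q 2 -> Q 1 -> Q 0 -> F -> 0  in Fun(P, R-mod), with dQ k : Q (k+1) => Q k
  and augmentation eps : Q 0 => F, exact at every object of P.\<close>
definition free_resolution :: "('r::comm_ring_1 \<Rightarrow> 'm::ab_group_add \<Rightarrow> 'm) \<Rightarrow> ('r \<Rightarrow> 'q::ab_group_add \<Rightarrow> 'q)
    \<Rightarrow> ('p::order \<Rightarrow> 'm set) \<Rightarrow> ('p \<Rightarrow> 'p \<Rightarrow> 'm \<Rightarrow> 'm)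
    \<Rightarrow> (nat \<Rightarrow> 'p \<Rightarrow> 'q set) \<Rightarrow> (nat \<Rightarrow> 'p \<Rightarrow> 'p \<Rightarrow> 'q \<Rightarrow> 'q) \<Rightarrow> (nat \<Rightarrow> 'p \<Rightarrow> 'q \<Rightarrow> 'q)
    \<Rightarrow> ('p \<Rightarrow> 'q \<Rightarrow> 'm) \<Rightarrow> bool" where
  "free_resolution s s' S f Q q dQ eps \<longleftrightarrow>
     (\<forall>k. free_pmod s' (Q k) (q k)) \<and>
     (\<forall>k. nat_trans s' s' (Q (Suc k)) (q (Suc k)) (Q k) (q k) (dQ k)) \<and>
     nat_trans s' s (Q 0) (q 0) S f eps \<and>
     (\<forall>i. eps i ` Q 0 i = S i) \<and>
     (\<forall>i. {x \<in> Q 0 i. eps i x = 0} = dQ 0 i ` Q 1 i) \<and>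
     (\<forall>k i. {x \<in> Q (Suc k) i. dQ k i x = 0} = dQ (Suc k) i ` Q (Suc (Suc k)) i)"

text \<open>H_n of the complex colim Q_\<bullet> vanishes (n > 0), i.e. colim_n F = 0 where colim_n is the
  n-th left derived functor of colim_P, computed from the free resolution Q.  Here
  colim Q_k = dsum (Q k) UNIV / colim_rel (Q k) (q k) UNIV and colim(dQ k) is induced
  componentwise: every cycle is a boundary modulo the relations.\<close>
definition colim_H_zero :: "('r::comm_ring_1 \<Rightarrow> 'q::ab_group_add \<Rightarrow> 'q) \<Rightarrow> (nat \<Rightarrow> 'p::order \<Rightarrow> 'q set)
    \<Rightarrow> (nat \<Rightarrow> 'p \<Rightarrow> 'p \<Rightarrow> 'q \<Rightarrow> 'q) \<Rightarrow> (nat \<Rightarrow> 'p \<Rightarrow> 'q \<Rightarrow> 'q) \<Rightarrow> nat \<Rightarrow> bool" where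
  "colim_H_zero s' Q q dQ n \<longleftrightarrow>
     (\<forall>x\<in>dsum (Q n) UNIV. (\<lambda>i. dQ (n - 1) i (x i)) \<in> colim_rel (Q (n - 1)) (q (n - 1)) UNIV \<longrightarrow>
        (\<exists>y\<in>dsum (Q (Suc n)) UNIV. (\<lambda>i. x i - dQ n i (y i)) \<in> colim_rel (Q n) (q n) UNIV))"

end

theory Submission
  imports Defs "HOL-Library.Multiset_Order"
begin

text \<open>
For a complex concentrated in degree 0, Reedy cofibrancy says that every latching map
\<open>colim\<^bsub>P<i\<^esub> F \<rightarrow> F(i)\<close> is injective, i.e. an element of \<open>\<Oplus>\<^bsub>j<i\<^esub> F(j)\<close> whose cocone
sum in \<open>F(i)\<close> vanishes is a sum of the generating relations
\<open>\<delta>\<^sub>k a - \<delta>\<^sub>l F(k<l) a\<close>. Both directions of the equivalence are inductions on the multiset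
of filtration degrees. If \<open>F\<close> is pseudo-projective, the top-degree component \<open>x\<^sub>j\<close> of such an
element lies in \<open>Im\<^sub>F(j)\<close> and is cancelled by generators coming from strictly below \<open>j\<close>.
If all latching maps are injective, the generators of a relation whose target \<open>m\<close> has top
degree add up to an element vanishing at \<open>m\<close>, which latching injectivity at \<open>m\<close> rewrites with
targets below \<open>m\<close>; so every relation is generated below its own support, and reading it off at
a maximal \<open>j\<close> gives \<open>x\<^sub>j \<in> Im\<^sub>F(j)\<close>.

For colim-acyclicity: free diagrams have injective latching maps, and for an epimorphism
\<open>Q \<rightarrow> F\<close> of such diagrams the kernel again has injective latching maps and every relation of
\<open>Q\<close> with values in the kernel is a relation of the kernel. Along a free resolution, this turns
every cycle of \<open>colim Q\<^sub>\<bullet>\<close> into a boundary modulo relations.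
\<close>

lemma filtration_less: "filtration d \<Longrightarrow> i < j \<Longrightarrow> d i < d j"
  unfolding filtration_def by blast

lemma degrees_mset_less:
  fixes d :: "'p \<Rightarrow> nat"
  assumes A: "finite A" and B: "finite B" and j: "j \<in> A" and sub: "B \<subseteq> (A - {j}) \<union> {t. d t < d j}"
  shows "image_mset d (mset_set B) < image_mset d (mset_set A)"
proof -
  let ?deg = "\<lambda>X. image_mset d (mset_set X)"
  have low: "?deg (B - A) < {#d j#}"
    using one_step_implies_multp[of "{#d j#}" "?deg (B - A)" "(<)" "{#}"] sub B
    by (auto simp: less_multiset_def)
  have "B = (B \<inter> A) \<union> (B - A)" by blast
  then have "mset_set B = mset_set (B \<inter> A) + mset_set (B - A)"
    using B by (metis Int_Diff_disjoint finite_Diff finite_Int mset_set_Union)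
  then have "?deg B = ?deg (B \<inter> A) + ?deg (B - A)" by simp
  also have "\<dots> \<le> ?deg (A - {j}) + ?deg (B - A)"
    using sub A by (intro add_right_mono subset_eq_imp_le_multiset image_mset_subseteq_mono) auto
  also have "\<dots> < ?deg (A - {j}) + {#d j#}"
    using low by (rule add_strict_left_mono)
  also have "\<dots> = ?deg A"
    using A j by (simp add: mset_set.remove)
  finally show ?thesis .
qed

lemma obtain_max_degree:
  fixes d :: "'p \<Rightarrow> nat"
  assumes "finite X" "X \<noteq> {}"
  obtains j where "j \<in> X" "\<And>t. t \<in> X \<Longrightarrow> d t \<le> d j"
proof -
  have "Max (d ` X) \<in> d ` X" using assms by simp
  then obtain j where j: "j \<in> X" "d j = Max (d ` X)" by auto
  then have "d t \<le> d j" if "t \<in> X" for t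
    using that assms(1) by simp
  with j show thesis using that by blast
qed

section \<open>Generators of the colimit relations\<close>

text \<open>A list of triples \<open>(k, l, a)\<close> stands for the sum of the generators
  \<open>\<delta>\<^sub>k a - \<delta>\<^sub>l (f k l a)\<close> of \<^const>\<open>colim_rel\<close>; unlike the inductive set, it exposes the
  targets \<open>l\<close> used, on which the inductions below operate.\<close>

fun gens_sum :: "('p \<Rightarrow> 'p \<Rightarrow> 'm \<Rightarrow> 'm) \<Rightarrow> ('p \<times> 'p \<times> 'm) list \<Rightarrow> 'p \<Rightarrow> 'm::ab_group_add" where
  "gens_sum f [] = (\<lambda>_. 0)"
| "gens_sum f ((k, l, a) # gs) =
     (\<lambda>t. (if t = k then a else 0) - (if t = l then f k l a else 0) + gens_sum f gs t)"

definition gens_on :: "('p::order \<Rightarrow> 'm set) \<Rightarrow> ('p \<times> 'p \<times> 'm) list \<Rightarrow> 'p set \<Rightarrow> bool" where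
  "gens_on S gs A \<longleftrightarrow> (\<forall>k l a. (k, l, a) \<in> set gs \<longrightarrow> k \<in> A \<and> l \<in> A \<and> k \<le> l \<and> a \<in> S k)"

definition gens_tgts :: "('p \<times> 'p \<times> 'm) list \<Rightarrow> 'p set" where
  "gens_tgts gs = (fst \<circ> snd) ` set gs"

lemma gens_on_simps [simp]:
  "gens_on S [] A"
  "gens_on S ((k, l, a) # gs) A \<longleftrightarrow> k \<in> A \<and> l \<in> A \<and> k \<le> l \<and> a \<in> S k \<and> gens_on S gs A"
  "gens_on S (gs @ hs) A \<longleftrightarrow> gens_on S gs A \<and> gens_on S hs A"
  by (auto simp: gens_on_def)

lemma gens_tgts_subset: "gens_on S gs A \<Longrightarrow> gens_tgts gs \<subseteq> A"
  by (force simp: gens_on_def gens_tgts_def)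

lemma gens_on_filter: "gens_on S gs A \<Longrightarrow> gens_on S (filter P gs) A"
  by (auto simp: gens_on_def)

lemma gens_on_mono: "gens_on S gs A \<Longrightarrow> A \<subseteq> B \<Longrightarrow> gens_on S gs B"
  by (auto simp: gens_on_def)

lemma gens_on_down_closed:
  assumes "gens_on S gs A" and "gens_tgts gs \<subseteq> D" and "\<And>l k. l \<in> D \<Longrightarrow> k \<le> l \<Longrightarrow> k \<in> D"
  shows "gens_on S gs D"
  unfolding gens_on_def
proof (intro allI impI)
  fix k l a assume g: "(k, l, a) \<in> set gs"
  then have "l \<in> D" using assms(2) by (force simp: gens_tgts_def)
  moreover have "k \<le> l" "a \<in> S k" using g assms(1) by (auto simp: gens_on_def)
  ultimately show "k \<in> D \<and> l \<in> D \<and> k \<le> l \<and> a \<in> S k" using assms(3) by blast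
qed

lemma finite_gens_tgts [simp]: "finite (gens_tgts gs)"
  by (simp add: gens_tgts_def)

lemma gens_tgts_simps [simp]:
  "gens_tgts [] = {}"
  "gens_tgts (gs @ hs) = gens_tgts gs \<union> gens_tgts hs"
  by (auto simp: gens_tgts_def)

lemma gens_sum_append: "gens_sum f (gs @ hs) t = gens_sum f gs t + gens_sum f hs t"
  by (induction f gs rule: gens_sum.induct) (simp_all add: algebra_simps)

lemma gens_sum_partition:
  "gens_sum f gs t = gens_sum f (filter P gs) t + gens_sum f (filter (\<lambda>g. \<not> P g) gs) t"
  by (induction f gs rule: gens_sum.induct) (simp_all add: algebra_simps)

lemma gens_sum_eq_0: "(\<And>k l a. (k, l, a) \<in> set gs \<Longrightarrow> t \<noteq> k \<and> t \<noteq> l) \<Longrightarrow> gens_sum f gs t = 0"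
  by (induction f gs rule: gens_sum.induct) auto

lemma gens_top_target_induct [case_names base step]:
  fixes d :: "'p \<Rightarrow> nat" and P :: "('p \<times> 'p \<times> 'm) list \<Rightarrow> bool"
  assumes base: "\<And>gs. gens_tgts gs \<subseteq> D \<Longrightarrow> P gs"
    and step: "\<And>gs m. m \<in> gens_tgts gs - D \<Longrightarrow> (\<And>l. l \<in> gens_tgts gs - D \<Longrightarrow> d l \<le> d m) \<Longrightarrow>
      (\<And>gs'. gens_tgts gs' - D \<subseteq> (gens_tgts gs - D - {m}) \<union> {t. d t < d m} \<Longrightarrow> P gs') \<Longrightarrow> P gs"
  shows "P gs"
proof (induction "image_mset d (mset_set (gens_tgts gs - D))" arbitrary: gs rule: less_induct)
  case less
  show ?case
  proof (cases "gens_tgts gs - D = {}")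
    case True
    then show ?thesis by (intro base) blast
  next
    case False
    then obtain m where m: "m \<in> gens_tgts gs - D" and m_max: "\<And>l. l \<in> gens_tgts gs - D \<Longrightarrow> d l \<le> d m"
      using obtain_max_degree[where d = d, OF finite_Diff[OF finite_gens_tgts]] by blast
    show ?thesis
    proof (rule step[OF m m_max])
      fix gs' :: "('p \<times> 'p \<times> 'm) list"
      assume "gens_tgts gs' - D \<subseteq> (gens_tgts gs - D - {m}) \<union> {t. d t < d m}"
      then have "image_mset d (mset_set (gens_tgts gs' - D)) < image_mset d (mset_set (gens_tgts gs - D))"
        using degrees_mset_less[OF _ _ m] by simp
      then show "P gs'" by (rule less.hyps)
    qed
  qed
qed

lemma dsum_mono: "A \<subseteq> B \<Longrightarrow> dsum S A \<subseteq> dsum S B"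
  by (auto simp: dsum_def)

definition cocone :: "('p \<Rightarrow> 'p \<Rightarrow> 'm \<Rightarrow> 'm) \<Rightarrow> 'p \<Rightarrow> ('p \<Rightarrow> 'm) \<Rightarrow> 'm::comm_monoid_add" where
  "cocone f i x = (\<Sum>j | x j \<noteq> 0. f j i (x j))"

lemma latching_mono_iff:
  "latching_mono S f i \<longleftrightarrow>
     (\<forall>x\<in>dsum S {j. j < i}. cocone f i x = 0 \<longrightarrow> x \<in> colim_rel S f {j. j < i})"
  by (simp add: latching_mono_def cocone_def)

locale diagram =
  fixes S :: "'p::order \<Rightarrow> 'm::ab_group_add set" and f :: "'p \<Rightarrow> 'p \<Rightarrow> 'm \<Rightarrow> 'm"
  assumes zero_in [simp]: "0 \<in> S i"
    and add_in: "x \<in> S i \<Longrightarrow> y \<in> S i \<Longrightarrow> x + y \<in> S i"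
    and uminus_in: "x \<in> S i \<Longrightarrow> - x \<in> S i"
    and map_in: "i \<le> j \<Longrightarrow> x \<in> S i \<Longrightarrow> f i j x \<in> S j"
    and map_add: "i \<le> j \<Longrightarrow> x \<in> S i \<Longrightarrow> y \<in> S i \<Longrightarrow> f i j (x + y) = f i j x + f i j y"
    and map_id: "x \<in> S i \<Longrightarrow> f i i x = x"
    and map_comp: "i \<le> j \<Longrightarrow> j \<le> k \<Longrightarrow> x \<in> S i \<Longrightarrow> f j k (f i j x) = f i k x"
begin

lemma diff_in: "x \<in> S i \<Longrightarrow> y \<in> S i \<Longrightarrow> x - y \<in> S i"
  unfolding diff_conv_add_uminus by (intro add_in uminus_in)

lemma sum_in: "(\<And>a. a \<in> B \<Longrightarrow> g a \<in> S i) \<Longrightarrow> sum g B \<in> S i"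
  by (induction B rule: infinite_finite_induct) (auto intro: add_in)

lemma map_zero: "i \<le> j \<Longrightarrow> f i j 0 = 0"
  using map_add[of i j 0 0] by simp

lemma map_uminus: "i \<le> j \<Longrightarrow> x \<in> S i \<Longrightarrow> f i j (- x) = - f i j x"
  using map_add[of i j x "- x"] add.inverse_unique[of "f i j x" "f i j (- x)"]
  by (simp add: map_zero uminus_in)

lemma map_sum: "i \<le> j \<Longrightarrow> (\<And>a. a \<in> B \<Longrightarrow> g a \<in> S i) \<Longrightarrow> f i j (sum g B) = (\<Sum>a\<in>B. f i j (g a))"
  by (induction B rule: infinite_finite_induct) (auto simp: map_zero map_add sum_in)

lemma colim_rel_iff_gens: "x \<in> colim_rel S f A \<longleftrightarrow> (\<exists>gs. gens_on S gs A \<and> x = gens_sum f gs)"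
proof
  assume "x \<in> colim_rel S f A"
  then show "\<exists>gs. gens_on S gs A \<and> x = gens_sum f gs"
  proof (induction rule: colim_rel.induct)
    case zero
    show ?case by (intro exI[of _ "[]"]) simp
  next
    case (step x k j a)
    then obtain gs where "gens_on S gs A" "x = gens_sum f gs" by blast
    with step show ?case by (intro exI[of _ "(k, j, a) # gs"]) (auto simp: algebra_simps)
  qed
next
  assume "\<exists>gs. gens_on S gs A \<and> x = gens_sum f gs"
  then obtain gs where "gens_on S gs A" "x = gens_sum f gs" by blast
  then show "x \<in> colim_rel S f A"
  proof (induction f gs arbitrary: x rule: gens_sum.induct)
    case (1 f)
    then show ?case using colim_rel.zero by simp
  next
    case (2 f k l a gs)
    then show ?case
      using colim_rel.step[of "gens_sum f gs" S f A k l a] by (simp add: algebra_simps)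
  qed
qed

lemma colim_rel_gen:
  "k \<in> A \<Longrightarrow> j \<in> A \<Longrightarrow> k \<le> j \<Longrightarrow> a \<in> S k \<Longrightarrow>
    (\<lambda>t. (if t = k then a else 0) - (if t = j then f k j a else 0)) \<in> colim_rel S f A"
  using colim_rel.step[OF colim_rel.zero] by simp

lemma colim_rel_add:
  assumes "x \<in> colim_rel S f A" and "y \<in> colim_rel S f A"
  shows "(\<lambda>t. x t + y t) \<in> colim_rel S f A"
  using assms(2)
proof (induction rule: colim_rel.induct)
  case zero
  then show ?case using assms(1) by simp
next
  case (step y k j a)
  then show ?case
    using colim_rel.step[of "\<lambda>t. x t + y t" S f A k j a] by (simp add: algebra_simps)
qed

lemma colim_rel_uminus:
  assumes "x \<in> colim_rel S f A"
  shows "(\<lambda>t. - x t) \<in> colim_rel S f A"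
  using assms
proof (induction rule: colim_rel.induct)
  case zero
  then show ?case using colim_rel.zero by simp
next
  case (step x k j a)
  have "(\<lambda>t. - (x t + (if t = k then a else 0) - (if t = j then f k j a else 0)))
      = (\<lambda>t. - x t + (if t = k then - a else 0) - (if t = j then f k j (- a) else 0))"
    using step.hyps by (auto simp: map_uminus)
  then show ?case
    using colim_rel.step[OF step.IH step.hyps(2-4) uminus_in[OF step.hyps(5)]] by simp
qed

lemma colim_rel_diff:
  "x \<in> colim_rel S f A \<Longrightarrow> y \<in> colim_rel S f A \<Longrightarrow> (\<lambda>t. x t - y t) \<in> colim_rel S f A"
  using colim_rel_add[OF _ colim_rel_uminus, of x A y] by simp

lemma colim_rel_mono: "x \<in> colim_rel S f A \<Longrightarrow> A \<subseteq> B \<Longrightarrow> x \<in> colim_rel S f B"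
  by (induction rule: colim_rel.induct) (auto intro: colim_rel.intros)

lemma colim_rel_sum:
  "finite I \<Longrightarrow> (\<And>i. i \<in> I \<Longrightarrow> h i \<in> colim_rel S f A) \<Longrightarrow> (\<lambda>t. \<Sum>i\<in>I. h i t) \<in> colim_rel S f A"
  by (induction I rule: finite_induct) (auto intro: colim_rel.zero colim_rel_add)

lemma colim_rel_dsum: "colim_rel S f A \<subseteq> dsum S A"
proof
  fix x assume "x \<in> colim_rel S f A"
  then show "x \<in> dsum S A"
  proof (induction rule: colim_rel.induct)
    case zero
    then show ?case by (simp add: dsum_def)
  next
    case (step x k j a)
    let ?y = "\<lambda>t. x t + (if t = k then a else 0) - (if t = j then f k j a else 0)"
    have "{t. ?y t \<noteq> 0} \<subseteq> {t. x t \<noteq> 0} \<union> {k, j}" by auto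
    moreover have "finite {t. x t \<noteq> 0}" using step.IH by (simp add: dsum_def)
    ultimately have "finite {t. ?y t \<noteq> 0}" by (meson finite.insertI finite_UnI finite.emptyI finite_subset)
    moreover have "?y t \<in> S t" for t
      using step by (auto simp: dsum_def intro!: diff_in add_in map_in)
    moreover have "t \<in> A" if "?y t \<noteq> 0" for t
      using step that by (cases "t = k \<or> t = j") (auto simp: dsum_def)
    ultimately show ?case by (simp add: dsum_def)
  qed
qed

lemma dsum_add: "x \<in> dsum S A \<Longrightarrow> y \<in> dsum S A \<Longrightarrow> (\<lambda>t. x t + y t) \<in> dsum S A"
proof -
  assume xy: "x \<in> dsum S A" "y \<in> dsum S A"
  have "{t. x t + y t \<noteq> 0} \<subseteq> {t. x t \<noteq> 0} \<union> {t. y t \<noteq> 0}" by auto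
  moreover have "finite ({t. x t \<noteq> 0} \<union> {t. y t \<noteq> 0})" using xy by (simp add: dsum_def)
  ultimately have "finite {t. x t + y t \<noteq> 0}" by (rule finite_subset)
  with xy show ?thesis by (auto simp: dsum_def intro: add_in) (metis add.left_neutral)
qed

lemma colim_rel_gens_to:
  assumes "finite K" and "j \<in> A" and "\<And>k. k \<in> K \<Longrightarrow> k \<in> A \<and> k \<le> j \<and> z k \<in> S k"
  shows "(\<lambda>t. (if t \<in> K then z t else 0) - (if t = j then \<Sum>k\<in>K. f k j (z k) else 0))
    \<in> colim_rel S f A"
proof -
  have "(\<lambda>t. (if t = k then z k else 0) - (if t = j then f k j (z k) else 0)) \<in> colim_rel S f A"
    if "k \<in> K" for k
    using assms(2) assms(3)[OF that] by (intro colim_rel_gen) auto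
  then have "(\<lambda>t. \<Sum>k\<in>K. (if t = k then z k else 0) - (if t = j then f k j (z k) else 0))
      \<in> colim_rel S f A"
    by (rule colim_rel_sum[OF assms(1)])
  moreover have "(\<Sum>k\<in>K. (if t = k then z k else 0) - (if t = j then f k j (z k) else 0))
      = (if t \<in> K then z t else 0) - (if t = j then \<Sum>k\<in>K. f k j (z k) else 0)" for t
    using assms(1) by (simp add: sum_subtractf)
  ultimately show ?thesis by simp
qed

lemma cocone_eq_sum:
  assumes "finite U" and "{t. x t \<noteq> 0} \<subseteq> U" and "U \<subseteq> {t. t \<le> i}"
  shows "cocone f i x = (\<Sum>t\<in>U. f t i (x t))"
  unfolding cocone_def by (rule sum.mono_neutral_left) (use assms map_zero in auto)

lemma cocone_add:
  assumes "x \<in> dsum S {t. t \<le> i}" and "y \<in> dsum S {t. t \<le> i}"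
  shows "cocone f i (\<lambda>t. x t + y t) = cocone f i x + cocone f i y"
proof -
  let ?U = "{t. x t \<noteq> 0} \<union> {t. y t \<noteq> 0}"
  have U: "finite ?U" "?U \<subseteq> {t. t \<le> i}" using assms by (auto simp: dsum_def)
  have "cocone f i (\<lambda>t. x t + y t) = (\<Sum>t\<in>?U. f t i (x t + y t))"
    by (rule cocone_eq_sum[OF U(1) _ U(2)]) auto
  also have "\<dots> = (\<Sum>t\<in>?U. f t i (x t)) + (\<Sum>t\<in>?U. f t i (y t))"
    using U(2) assms by (auto simp: dsum_def map_add sum.distrib[symmetric] intro: sum.cong)
  also have "\<dots> = cocone f i x + cocone f i y"
    using cocone_eq_sum[OF U(1) _ U(2), of x] cocone_eq_sum[OF U(1) _ U(2), of y] by auto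
  finally show ?thesis .
qed

lemma cocone_colim_rel: "x \<in> colim_rel S f {t. t \<le> i} \<Longrightarrow> cocone f i x = 0"
proof (induction rule: colim_rel.induct)
  case zero
  then show ?case by (simp add: cocone_def)
next
  case (step x k j a)
  define g where "g t = (if t = k then a else 0) - (if t = j then f k j a else 0)" for t
  have g_rel: "g \<in> colim_rel S f {t. t \<le> i}"
    unfolding g_def using step.hyps by (intro colim_rel_gen) auto
  have "cocone f i g = 0"
  proof (cases "k = j")
    case True
    then show ?thesis using step.hyps by (simp add: g_def map_id cocone_def)
  next
    case False
    have "cocone f i g = (\<Sum>t\<in>{k, j}. f t i (g t))"
      by (rule cocone_eq_sum) (use step.hyps in \<open>auto simp: g_def\<close>)
    also have "\<dots> = f k i a - f j i (f k j a)"
      using False step.hyps by (simp add: g_def map_uminus map_in)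
    also have "\<dots> = 0"
      using step.hyps by (simp add: map_comp)
    finally show ?thesis .
  qed
  moreover have "cocone f i (\<lambda>t. x t + g t) = cocone f i x + cocone f i g"
    using colim_rel_dsum step.hyps(1) g_rel by (intro cocone_add) auto
  ultimately show ?case
    using step.IH by (simp add: g_def add_diff_eq)
qed

text \<open>The colimit over a poset with top element \<open>i\<close> is \<open>F(i)\<close>.\<close>

lemma colim_rel_of_cocone_eq_0:
  assumes "x \<in> dsum S {t. t \<le> i}" and "cocone f i x = 0"
  shows "x \<in> colim_rel S f {t. t \<le> i}"
proof -
  have "(\<lambda>t. (if t \<in> {t. x t \<noteq> 0} then x t else 0) - (if t = i then cocone f i x else 0))
      \<in> colim_rel S f {t. t \<le> i}"
    unfolding cocone_def using assms(1) by (intro colim_rel_gens_to) (auto simp: dsum_def)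
  moreover have "(\<lambda>t. (if t \<in> {t. x t \<noteq> 0} then x t else 0) - (if t = i then cocone f i x else 0))
      = x"
    using assms(2) by auto
  ultimately show ?thesis by simp
qed

lemma latching_mono_colim_rel_less:
  assumes "latching_mono S f i" and "x \<in> colim_rel S f {t. t \<le> i}" and "x i = 0"
  shows "x \<in> colim_rel S f {t. t < i}"
proof -
  have "x \<in> dsum S {t. t \<le> i}"
    using colim_rel_dsum assms(2) by blast
  then have "x \<in> dsum S {t. t < i}"
    using assms(3) by (auto simp: dsum_def less_le)
  moreover have "cocone f i x = 0" by (rule cocone_colim_rel[OF assms(2)])
  ultimately show ?thesis using assms(1) by (simp add: latching_mono_iff)
qed

lemma gens_split_target:
  assumes "gens_on S gs A" and "\<And>l. l \<in> gens_tgts gs \<Longrightarrow> \<not> m < l"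
  obtains top rest where "top \<in> colim_rel S f {t. t \<le> m}" and "gens_on S rest A"
    and "gens_tgts rest = gens_tgts gs - {m}" and "gens_sum f rest m = 0"
    and "\<And>t. gens_sum f gs t = top t + gens_sum f rest t"
proof -
  define top where "top = filter (\<lambda>g. fst (snd g) = m) gs"
  define rest where "rest = filter (\<lambda>g. fst (snd g) \<noteq> m) gs"
  have "gens_on S top {t. t \<le> m}"
    using assms(1) by (auto simp: gens_on_def top_def)
  then have "gens_sum f top \<in> colim_rel S f {t. t \<le> m}"
    using colim_rel_iff_gens by blast
  moreover have "gens_on S rest A"
    unfolding rest_def using assms(1) by (rule gens_on_filter)
  moreover have "gens_tgts rest = gens_tgts gs - {m}"
    by (force simp: gens_tgts_def rest_def)
  moreover have "gens_sum f rest m = 0"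
  proof (rule gens_sum_eq_0)
    fix k l a assume "(k, l, a) \<in> set rest"
    then have "(k, l, a) \<in> set gs" "l \<noteq> m" by (auto simp: rest_def)
    moreover from this have "k \<le> l" "l \<in> gens_tgts gs"
      using assms(1) by (auto simp: gens_on_def gens_tgts_def) force
    ultimately show "m \<noteq> k \<and> m \<noteq> l" using assms(2) by (auto simp: less_le)
  qed
  moreover have "gens_sum f gs t = gens_sum f top t + gens_sum f rest t" for t
    unfolding top_def rest_def by (rule gens_sum_partition)
  ultimately show thesis by (rule that)
qed

section \<open>Latching injectivity and pseudo-projectivity\<close>

lemma ImF_eq_cocone_image: "ImF S f j = cocone f j ` dsum S {k. k < j}"
proof (intro equalityI subsetI)
  fix y assume "y \<in> ImF S f j"
  then obtain K z where K: "finite K" "K \<subseteq> {k. k < j}" "\<And>k. k \<in> K \<Longrightarrow> z k \<in> S k"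
    and y: "y = (\<Sum>k\<in>K. f k j (z k))"
    by (auto simp: ImF_def)
  define x where "x k = (if k \<in> K then z k else 0)" for k
  have "x \<in> dsum S {k. k < j}"
    using K by (auto simp: dsum_def x_def intro: finite_subset[OF _ K(1)])
  moreover have "cocone f j x = (\<Sum>k\<in>K. f k j (x k))"
    using K by (intro cocone_eq_sum) (auto simp: x_def)
  then have "cocone f j x = y"
    unfolding y by (simp add: x_def)
  ultimately show "y \<in> cocone f j ` dsum S {k. k < j}" by blast
next
  fix y assume "y \<in> cocone f j ` dsum S {k. k < j}"
  then obtain x where "x \<in> dsum S {k. k < j}" "y = cocone f j x" by blast
  then show "y \<in> ImF S f j"
    unfolding ImF_def cocone_def
    by (intro CollectI exI[of _ "{t. x t \<noteq> 0}"] exI[of _ x]) (auto simp: dsum_def)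
qed

lemma ImF_add:
  assumes "y \<in> ImF S f j" and "y' \<in> ImF S f j"
  shows "y + y' \<in> ImF S f j"
proof -
  obtain x x' where x: "x \<in> dsum S {k. k < j}" "y = cocone f j x"
    and x': "x' \<in> dsum S {k. k < j}" "y' = cocone f j x'"
    using assms by (auto simp: ImF_eq_cocone_image)
  have "dsum S {k. k < j} \<subseteq> dsum S {k. k \<le> j}" by (rule dsum_mono) auto
  with x(1) x'(1) have "cocone f j (\<lambda>t. x t + x' t) = cocone f j x + cocone f j x'"
    by (intro cocone_add) auto
  with x(2) x'(2) have "y + y' = cocone f j (\<lambda>t. x t + x' t)" by simp
  with dsum_add[OF x(1) x'(1)] show ?thesis
    unfolding ImF_eq_cocone_image by blast
qed

lemma ImF_map: "k < j \<Longrightarrow> a \<in> S k \<Longrightarrow> f k j a \<in> ImF S f j"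
  unfolding ImF_def by (intro CollectI exI[of _ "{k}"] exI[of _ "\<lambda>_. a"]) auto

lemma zero_in_ImF: "0 \<in> ImF S f j"
  unfolding ImF_def by (intro CollectI exI[of _ "{}"]) auto

lemma colim_rel_value_in_ImF:
  assumes "x \<in> colim_rel S f A" and "\<And>l. l \<in> A \<Longrightarrow> \<not> j < l"
  shows "x j \<in> ImF S f j"
  using assms(1)
proof (induction rule: colim_rel.induct)
  case zero
  then show ?case by (simp add: zero_in_ImF)
next
  case (step x k l a)
  have "(if j = k then a else 0) - (if j = l then f k l a else 0) \<in> ImF S f j"
  proof (cases "j = l")
    case True
    show ?thesis
    proof (cases "k = l")
      case True
      with \<open>j = l\<close> step.hyps show ?thesis by (simp add: map_id zero_in_ImF)
    next
      case False
      with \<open>j = l\<close> step.hyps have "k < j" "- a \<in> S k" by (auto intro: uminus_in)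
      with \<open>j = l\<close> False step.hyps show ?thesis
        using ImF_map[of k j "- a"] map_uminus[of k j a] by simp
    qed
  next
    case False
    with step.hyps assms(2) have "j \<noteq> k" by (auto simp: less_le)
    with False show ?thesis by (simp add: zero_in_ImF)
  qed
  with step.IH show ?case by (simp add: add_diff_eq[symmetric] ImF_add)
qed

text \<open>Take a generator target \<open>m\<close> outside the down-closure of the support, of maximal degree.
  No target lies above \<open>m\<close>, so the generators into \<open>m\<close> form a relation over \<open>P\<^sub>\<le>\<^sub>m\<close> vanishing at
  \<open>m\<close>; latching injectivity at \<open>m\<close> rewrites it with targets below \<open>m\<close>.\<close>

lemma colim_rel_down_closure_support:
  fixes d :: "'p \<Rightarrow> nat"
  assumes filt: "filtration d" and lat: "\<And>l. latching_mono S f l" and x: "x \<in> colim_rel S f UNIV"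
  shows "x \<in> colim_rel S f {j. \<exists>t. x t \<noteq> 0 \<and> j \<le> t}"
proof -
  define D where "D = {j. \<exists>t. x t \<noteq> 0 \<and> j \<le> t}"
  have "x \<in> colim_rel S f D" if "gens_on S gs UNIV" "gens_sum f gs = x" for gs
    using that
  proof (induction gs rule: gens_top_target_induct[where d = d and D = D])
    case (base gs)
    have "gens_on S gs D"
    proof (rule gens_on_down_closed[OF base.prems(1) base.hyps])
      show "k \<in> D" if "l \<in> D" "k \<le> l" for l k
        using that by (auto simp: D_def intro: order.trans)
    qed
    with base.prems(2) show ?case using colim_rel_iff_gens by blast
  next
    case (step gs m)
    have "\<not> m < l" if "l \<in> gens_tgts gs" for l
    proof
      assume "m < l"
      then have "l \<notin> D" using step.hyps(1) by (auto simp: D_def dest: less_imp_le order.trans)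
      with that have "d l \<le> d m" by (intro step.hyps(2)) blast
      with filtration_less[OF filt \<open>m < l\<close>] show False by simp
    qed
    then obtain top rest where top: "top \<in> colim_rel S f {t. t \<le> m}"
      and rest: "gens_on S rest UNIV" "gens_tgts rest = gens_tgts gs - {m}" "gens_sum f rest m = 0"
      and split: "\<And>t. gens_sum f gs t = top t + gens_sum f rest t"
      using gens_split_target[OF step.prems(1)] by metis
    have "x m = 0" using step.hyps(1) by (auto simp: D_def)
    then have "top m = 0" using split[of m] rest(3) step.prems(2) by simp
    with lat top have "top \<in> colim_rel S f {t. t < m}" by (rule latching_mono_colim_rel_less)
    then obtain low where low: "gens_on S low {t. t < m}" "top = gens_sum f low"
      using colim_rel_iff_gens by blast
    have "gens_tgts (low @ rest) - D \<subseteq> ((gens_tgts gs - D) - {m}) \<union> {t. d t < d m}"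
      using gens_tgts_subset[OF low(1)] rest(2) filtration_less[OF filt] by auto
    moreover have "gens_on S (low @ rest) UNIV" using low(1) rest(1) by (auto intro: gens_on_mono)
    moreover have "gens_sum f (low @ rest) = x"
      using split low(2) step.prems(2) by (auto simp: gens_sum_append)
    ultimately show ?case by (rule step.IH)
  qed
  moreover obtain gs where "gens_on S gs UNIV" "x = gens_sum f gs"
    using x colim_rel_iff_gens by blast
  ultimately show ?thesis unfolding D_def by blast
qed

text \<open>The restriction of \<open>x\<close> to \<open>J\<close> is a relation over \<open>P\<^sub>\<le>\<^sub>i\<close>; rewritten below its support it
  uses no index above the maximal \<open>j\<close>, so its value at \<open>j\<close> lies in \<open>Im\<^sub>F(j)\<close>.\<close>

lemma latching_imp_pseudo_projective_at:
  fixes d :: "'p \<Rightarrow> nat"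
  assumes "filtration d" and "\<And>l. latching_mono S f l"
  shows "pseudo_projective_at S f i"
  unfolding pseudo_projective_at_def
proof (intro allI impI ballI)
  fix J x j
  assume J: "finite J" "J \<subseteq> {j. j \<le> i}" "\<forall>j\<in>J. x j \<in> S j" "(\<Sum>j\<in>J. f j i (x j)) = 0"
    and j: "j \<in> maxs J"
  define y where "y t = (if t \<in> J then x t else 0)" for t
  have y_dsum: "y \<in> dsum S {t. t \<le> i}"
    using J by (auto simp: dsum_def y_def intro: finite_subset[OF _ J(1)])
  have "cocone f i y = (\<Sum>t\<in>J. f t i (y t))"
    using J by (intro cocone_eq_sum) (auto simp: y_def)
  with J(4) have "cocone f i y = 0" by (simp add: y_def)
  with y_dsum have "y \<in> colim_rel S f {t. t \<le> i}" by (rule colim_rel_of_cocone_eq_0)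
  then have "y \<in> colim_rel S f {l. \<exists>t. y t \<noteq> 0 \<and> l \<le> t}"
    using colim_rel_down_closure_support[OF assms colim_rel_mono] by blast
  moreover have "\<not> j < l" if "l \<in> {l. \<exists>t. y t \<noteq> 0 \<and> l \<le> t}" for l
  proof
    assume "j < l"
    from that obtain t where "t \<in> J" "l \<le> t" by (auto simp: y_def split: if_splits)
    with less_le_trans[OF \<open>j < l\<close>] j show False unfolding maxs_def by blast
  qed
  ultimately have "y j \<in> ImF S f j" by (rule colim_rel_value_in_ImF)
  moreover have "j \<in> J" using j by (simp add: maxs_def)
  ultimately show "x j \<in> ImF S f j" by (simp add: y_def)
qed

lemma ImF_colim_rel:
  assumes "y \<in> ImF S f j" and "j \<in> A" and "{k. k < j} \<subseteq> A"
  obtains r where "r \<in> colim_rel S f A" and "r j = - y" and "\<And>t. r t \<noteq> 0 \<Longrightarrow> t = j \<or> t < j"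
proof -
  obtain z where z: "z \<in> dsum S {k. k < j}" and y: "y = cocone f j z"
    using assms(1) by (auto simp: ImF_eq_cocone_image)
  define K where "K = {k. z k \<noteq> 0}"
  have K: "finite K" "K \<subseteq> {k. k < j}" "\<And>k. z k \<in> S k"
    using z by (auto simp: dsum_def K_def)
  define r where "r t = (if t \<in> K then z t else 0) - (if t = j then y else 0)" for t
  have "r \<in> colim_rel S f A"
    unfolding r_def y cocone_def K_def[symmetric]
    using K assms(2,3) by (intro colim_rel_gens_to) (auto simp: less_imp_le)
  moreover have "r j = - y" using K(2) by (auto simp: r_def)
  moreover have "t = j \<or> t < j" if "r t \<noteq> 0" for t
    using that K(2) by (auto simp: r_def split: if_splits)
  ultimately show thesis by (rule that)
qed

lemma cocone_add_colim_rel: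
  assumes "x \<in> dsum S {t. t < i}" and "cocone f i x = 0" and "r \<in> colim_rel S f {t. t < i}"
  shows "(\<lambda>t. x t + r t) \<in> dsum S {t. t < i}" and "cocone f i (\<lambda>t. x t + r t) = 0"
proof -
  have r: "r \<in> dsum S {t. t < i}" "r \<in> colim_rel S f {t. t \<le> i}"
    using assms(3) colim_rel_dsum by (auto intro: colim_rel_mono)
  show "(\<lambda>t. x t + r t) \<in> dsum S {t. t < i}"
    by (rule dsum_add[OF assms(1) r(1)])
  have "dsum S {t. t < i} \<subseteq> dsum S {t. t \<le> i}" by (rule dsum_mono) auto
  with assms(1) r(1) have "cocone f i (\<lambda>t. x t + r t) = cocone f i x + cocone f i r"
    by (intro cocone_add) auto
  with assms(2) cocone_colim_rel[OF r(2)] show "cocone f i (\<lambda>t. x t + r t) = 0" by simp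
qed

text \<open>The top-degree component \<open>x\<^sub>j\<close> lies in \<open>Im\<^sub>F(j)\<close>, so adding a relation removes \<open>j\<close> from
  the support at the cost of indices below \<open>j\<close> only.\<close>

lemma pseudo_projective_at_imp_latching:
  fixes d :: "'p \<Rightarrow> nat"
  assumes filt: "filtration d" and pp: "pseudo_projective_at S f i"
  shows "latching_mono S f i"
proof -
  have "x \<in> colim_rel S f {t. t < i}" if "x \<in> dsum S {t. t < i}" "cocone f i x = 0" for x
    using that
  proof (induction "image_mset d (mset_set {t. x t \<noteq> 0})" arbitrary: x rule: less_induct)
    case less
    let ?X = "{t. x t \<noteq> 0}"
    have fin: "finite ?X" and x_in: "\<And>t. x t \<in> S t" and x_lt: "\<And>t. x t \<noteq> 0 \<Longrightarrow> t < i"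
      using less.prems(1) by (auto simp: dsum_def)
    show ?case
    proof (cases "?X = {}")
      case True
      then have "x = (\<lambda>_. 0)" by auto
      then show ?thesis by (simp add: colim_rel.zero)
    next
      case False
      obtain j where j: "j \<in> ?X" and j_max: "\<And>t. t \<in> ?X \<Longrightarrow> d t \<le> d j"
        using obtain_max_degree[where d = d, OF fin False] by blast
      have "j \<in> maxs ?X"
        using j j_max filtration_less[OF filt] by (force simp: maxs_def)
      moreover have "(\<Sum>t\<in>?X. f t i (x t)) = 0"
        using less.prems(2) by (simp add: cocone_def)
      ultimately have "x j \<in> ImF S f j"
        using pp fin x_in x_lt unfolding pseudo_projective_at_def by (force intro: less_imp_le)
      moreover have "j \<in> {t. t < i}" "{k. k < j} \<subseteq> {t. t < i}"
        using j x_lt by (auto dest: order.strict_trans)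
      ultimately obtain r where r: "r \<in> colim_rel S f {t. t < i}" and rj: "r j = - x j"
        and r_supp: "\<And>t. r t \<noteq> 0 \<Longrightarrow> t = j \<or> t < j"
        by (rule ImF_colim_rel) blast
      note x' = cocone_add_colim_rel[OF less.prems r]
      have "{t. x t + r t \<noteq> 0} \<subseteq> (?X - {j}) \<union> {t. d t < d j}"
        using rj r_supp filtration_less[OF filt] by fastforce
      then have "image_mset d (mset_set {t. x t + r t \<noteq> 0}) < image_mset d (mset_set ?X)"
        using degrees_mset_less[OF fin _ j] x'(1) by (simp add: dsum_def)
      from less.hyps[OF this x'] have "(\<lambda>t. x t + r t) \<in> colim_rel S f {t. t < i}" .
      from colim_rel_diff[OF this r] show ?thesis by simp
    qed
  qed
  then show ?thesis by (simp add: latching_mono_iff)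
qed

lemma latching_iff_pseudo_projective:
  fixes d :: "'p \<Rightarrow> nat"
  assumes "filtration d"
  shows "(\<forall>i. latching_mono S f i) \<longleftrightarrow> pseudo_projective S f"
  using latching_imp_pseudo_projective_at[OF assms] pseudo_projective_at_imp_latching[OF assms]
  unfolding pseudo_projective_def by blast

end

lemma latching_mono_zero: "latching_mono (\<lambda>_. {0}) f i"
proof -
  have "x = (\<lambda>_. 0)" if "x \<in> dsum (\<lambda>_. {0}) A" for x :: "'a \<Rightarrow> 'b" and A
    using that by (auto simp: dsum_def)
  then show ?thesis by (auto simp: latching_mono_def intro: colim_rel.zero)
qed

lemma reedy_cofibrant_deg0_iff:
  "reedy_cofibrant (deg0 S) (deg0_map f) \<longleftrightarrow> (\<forall>i. latching_mono S f i)"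
proof -
  have "latching_mono (\<lambda>j. deg0 S j n) (\<lambda>j k. deg0_map f j k n) i
      \<longleftrightarrow> (n = 0 \<longrightarrow> latching_mono S f i)" for i n
    by (cases "n = 0") (simp_all add: deg0_def deg0_map_def latching_mono_zero)
  then show ?thesis
    unfolding reedy_cofibrant_def by auto
qed

lemma pmod_diagram: "pmod s S f \<Longrightarrow> diagram S f"
  unfolding pmod_def lin_on_def
  by unfold_locales (auto simp: module.subspace_0 module.subspace_add module.subspace_neg image_subset_iff)

lemma pmod_map_scale: "pmod s S f \<Longrightarrow> i \<le> j \<Longrightarrow> x \<in> S i \<Longrightarrow> f i j (s c x) = s c (f i j x)"
  unfolding pmod_def lin_on_def by blast

section \<open>Free diagrams\<close>

context module
begin

lemma span_inj_image_coordinates: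
  assumes inj: "inj_on \<beta> B" and y: "y \<in> span (\<beta> ` B)"
  shows "\<exists>c. finite {p. c p \<noteq> 0} \<and> (\<forall>p. c p \<noteq> 0 \<longrightarrow> p \<in> B) \<and> y = (\<Sum>p | c p \<noteq> 0. c p *s \<beta> p)"
proof -
  obtain g where g: "finite {v. g v \<noteq> 0}" "\<And>v. g v \<noteq> 0 \<Longrightarrow> v \<in> \<beta> ` B"
    and y_g: "y = (\<Sum>v | g v \<noteq> 0. g v *s v)"
    using y unfolding span_explicit' mem_Collect_eq by blast
  define c where "c p = (if p \<in> B then g (\<beta> p) else 0)" for p
  have supp: "{v. g v \<noteq> 0} = \<beta> ` {p. c p \<noteq> 0}"
    using g(2) by (auto simp: c_def)
  have inj_supp: "inj_on \<beta> {p. c p \<noteq> 0}"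
    by (rule inj_on_subset[OF inj]) (auto simp: c_def split: if_splits)
  have "finite {p. c p \<noteq> 0}"
    using g(1) supp finite_image_iff[OF inj_supp] by simp
  moreover have "y = (\<Sum>p | c p \<noteq> 0. c p *s \<beta> p)"
    unfolding y_g supp sum.reindex[OF inj_supp] by (rule sum.cong) (auto simp: c_def)
  moreover have "\<forall>p. c p \<noteq> 0 \<longrightarrow> p \<in> B" by (simp add: c_def)
  ultimately show ?thesis by blast
qed

lemma independent_inj_image_coordinates:
  assumes inj: "inj_on \<beta> B" and indep: "independent (\<beta> ` B)"
    and I: "finite I" "I \<subseteq> B" and sum0: "(\<Sum>p\<in>I. c p *s \<beta> p) = 0" and p: "p \<in> I"
  shows "c p = 0"
proof -
  have inj_I: "inj_on \<beta> I" by (rule inj_on_subset[OF inj I(2)])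
  define u where "u v = c (the_inv_into I \<beta> v)" for v
  have "(\<Sum>v\<in>\<beta> ` I. u v *s v) = (\<Sum>p\<in>I. c p *s \<beta> p)"
    by (simp add: sum.reindex[OF inj_I] u_def the_inv_into_f_f[OF inj_I])
  with sum0 have "(\<Sum>v\<in>\<beta> ` I. u v *s v) = 0" by simp
  then have "u (\<beta> p) = 0"
    using independentD[OF indep] I p by (meson finite_imageI image_eqI image_mono)
  then show ?thesis by (simp add: u_def the_inv_into_f_f[OF inj_I p])
qed

lemma common_coordinates:
  assumes "finite T"
    and "\<And>t. t \<in> T \<Longrightarrow> \<exists>c. finite {p. c p \<noteq> 0} \<and> (\<forall>p. c p \<noteq> 0 \<longrightarrow> B t p)
      \<and> x t = (\<Sum>p | c p \<noteq> 0. c p *s \<beta> t p)"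
  obtains c P where "finite P" and "\<And>t p. t \<in> T \<Longrightarrow> c t p \<noteq> 0 \<Longrightarrow> B t p"
    and "\<And>p. p \<in> P \<Longrightarrow> \<exists>t\<in>T. c t p \<noteq> 0" and "\<And>t. t \<in> T \<Longrightarrow> x t = (\<Sum>p\<in>P. c t p *s \<beta> t p)"
proof -
  have "\<forall>t\<in>T. \<exists>c. finite {p. c p \<noteq> 0} \<and> (\<forall>p. c p \<noteq> 0 \<longrightarrow> B t p)
      \<and> x t = (\<Sum>p | c p \<noteq> 0. c p *s \<beta> t p)"
    using assms(2) by blast
  from bchoice[OF this] obtain c where c: "\<forall>t\<in>T. finite {p. c t p \<noteq> 0}
      \<and> (\<forall>p. c t p \<noteq> 0 \<longrightarrow> B t p) \<and> x t = (\<Sum>p | c t p \<noteq> 0. c t p *s \<beta> t p)"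
    by blast
  define P where "P = (\<Union>t\<in>T. {p. c t p \<noteq> 0})"
  have P: "finite P" using assms(1) c by (simp add: P_def)
  have "x t = (\<Sum>p\<in>P. c t p *s \<beta> t p)" if "t \<in> T" for t
  proof -
    have "x t = (\<Sum>p | c t p \<noteq> 0. c t p *s \<beta> t p)" using c that by blast
    also have "\<dots> = (\<Sum>p\<in>P. c t p *s \<beta> t p)"
      by (rule sum.mono_neutral_left) (use P that in \<open>auto simp: P_def\<close>)
    finally show ?thesis .
  qed
  moreover have "\<exists>t\<in>T. c t p \<noteq> 0" if "p \<in> P" for p
    using that by (simp add: P_def)
  ultimately show thesis using that P c by blast
qed

end

lemma free_pmod_coordinates:
  fixes s :: "'r::comm_ring_1 \<Rightarrow> 'q::ab_group_add \<Rightarrow> 'q"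
  assumes "free_pmod s Q q"
  obtains X where "\<And>i. X i \<subseteq> Q i"
    and "\<And>j y. y \<in> Q j \<Longrightarrow> \<exists>c. finite {p. c p \<noteq> 0}
      \<and> (\<forall>p. c p \<noteq> 0 \<longrightarrow> fst p \<le> j \<and> snd p \<in> X (fst p))
      \<and> y = (\<Sum>p | c p \<noteq> 0. s (c p) (q (fst p) j (snd p)))"
    and "\<And>j I c p. finite I \<Longrightarrow> (\<And>p. p \<in> I \<Longrightarrow> fst p \<le> j \<and> snd p \<in> X (fst p)) \<Longrightarrow>
      (\<Sum>p\<in>I. s (c p) (q (fst p) j (snd p))) = 0 \<Longrightarrow> p \<in> I \<Longrightarrow> c p = 0"
proof -
  interpret module s using assms by (simp add: free_pmod_def pmod_def)
  obtain X where X: "\<And>i. X i \<subseteq> Q i" and basis: "\<And>j.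
      inj_on (\<lambda>(i, x). q i j x) {(i, x). i \<le> j \<and> x \<in> X i} \<and>
      \<not> dependent ((\<lambda>(i, x). q i j x) ` {(i, x). i \<le> j \<and> x \<in> X i}) \<and>
      span ((\<lambda>(i, x). q i j x) ` {(i, x). i \<le> j \<and> x \<in> X i}) = Q j"
    using assms unfolding free_pmod_def by blast
  define B where "B j = {p. fst p \<le> j \<and> snd p \<in> X (fst p)}" for j
  define \<beta> where "\<beta> j p = q (fst p) j (snd p)" for j p
  have "(\<lambda>(i, x). q i j x) = \<beta> j" and "{(i, x). i \<le> j \<and> x \<in> X i} = B j" for j
    by (auto simp: \<beta>_def B_def)
  then have inj: "inj_on (\<beta> j) (B j)" and indep: "independent (\<beta> j ` B j)"
    and span: "span (\<beta> j ` B j) = Q j" for j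
    using basis[of j] by simp_all
  show thesis
  proof (rule that[OF X])
    show "\<exists>c. finite {p. c p \<noteq> 0} \<and> (\<forall>p. c p \<noteq> 0 \<longrightarrow> fst p \<le> j \<and> snd p \<in> X (fst p))
        \<and> y = (\<Sum>p | c p \<noteq> 0. s (c p) (q (fst p) j (snd p)))" if "y \<in> Q j" for j y
    proof -
      have "y \<in> span (\<beta> j ` B j)" using that span[of j] by simp
      from span_inj_image_coordinates[OF inj this] show ?thesis by (simp add: B_def \<beta>_def)
    qed
    show "c p = 0" if "finite I" "\<And>p. p \<in> I \<Longrightarrow> fst p \<le> j \<and> snd p \<in> X (fst p)"
      "(\<Sum>p\<in>I. s (c p) (q (fst p) j (snd p))) = 0" "p \<in> I" for j I c p
    proof (rule independent_inj_image_coordinates[OF inj indep that(1) _ _ that(4)])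
      show "I \<subseteq> B j" using that(2) by (auto simp: B_def)
    qed (use that(3) in \<open>simp add: \<beta>_def\<close>)
  qed
qed

text \<open>Pushing each coordinate \<open>c \<cdot> Q(i'<t) x'\<close> of \<open>x\<^sub>t\<close> down to \<open>\<delta>\<^sub>i\<^sub>' (c \<cdot> x')\<close> changes \<open>x\<close> by a
  relation.\<close>

lemma pmod_colim_rel_push_down:
  fixes s :: "'r::comm_ring_1 \<Rightarrow> 'q::ab_group_add \<Rightarrow> 'q"
  assumes pm: "pmod s Q q" and T: "finite T" "T \<subseteq> A" and P: "finite P"
    and c: "\<And>t p. t \<in> T \<Longrightarrow> c t p \<noteq> 0 \<Longrightarrow> fst p \<le> t \<and> fst p \<in> A \<and> snd p \<in> Q (fst p)"
  shows "(\<lambda>u. (\<Sum>p\<in>P. if u = fst p then s (\<Sum>t\<in>T. c t p) (snd p) else 0)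
    - (if u \<in> T then \<Sum>p\<in>P. s (c u p) (q (fst p) u (snd p)) else 0)) \<in> colim_rel Q q A"
proof -
  interpret module s using pm by (simp add: pmod_def)
  interpret Q: diagram Q q by (rule pmod_diagram[OF pm])
  have sub: "subspace (Q t)" for t using pm by (simp add: pmod_def)
  define g where "g t p u = (if u = fst p then s (c t p) (snd p) else 0)
    - (if u = t then s (c t p) (q (fst p) t (snd p)) else 0)" for t p u
  have g_rel: "g t p \<in> colim_rel Q q A" if "t \<in> T" for t p
  proof (cases "c t p = 0")
    case True
    then have "g t p = (\<lambda>_. 0)" by (auto simp: g_def)
    then show ?thesis by (simp add: colim_rel.zero)
  next
    case False
    with c[OF that] have p: "fst p \<le> t" "fst p \<in> A" "snd p \<in> Q (fst p)" by auto
    then have "g t p = (\<lambda>u. (if u = fst p then s (c t p) (snd p) else 0)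
        - (if u = t then q (fst p) t (s (c t p) (snd p)) else 0))"
      by (simp add: fun_eq_iff g_def pmod_map_scale[OF pm])
    also have "\<dots> \<in> colim_rel Q q A"
      using p T(2) that by (intro Q.colim_rel_gen subspace_scale[OF sub]) auto
    finally show ?thesis .
  qed
  have "(\<lambda>u. \<Sum>t\<in>T. \<Sum>p\<in>P. g t p u) \<in> colim_rel Q q A"
    using T(1) P g_rel by (intro Q.colim_rel_sum) auto
  moreover have "(\<Sum>t\<in>T. \<Sum>p\<in>P. if u = fst p then s (c t p) (snd p) else 0)
      = (\<Sum>p\<in>P. if u = fst p then s (\<Sum>t\<in>T. c t p) (snd p) else 0)" for u
    by (subst sum.swap) (auto simp: scale_sum_left intro!: sum.cong)
  moreover have "(\<Sum>t\<in>T. \<Sum>p\<in>P. if u = t then s (c t p) (q (fst p) t (snd p)) else 0)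
      = (if u \<in> T then \<Sum>p\<in>P. s (c u p) (q (fst p) u (snd p)) else 0)" for u
  proof -
    have "(\<Sum>t\<in>T. \<Sum>p\<in>P. if u = t then s (c t p) (q (fst p) t (snd p)) else 0)
        = (\<Sum>t\<in>T. if u = t then \<Sum>p\<in>P. s (c t p) (q (fst p) t (snd p)) else 0)"
      by (intro sum.cong) auto
    also have "\<dots> = (if u \<in> T then \<Sum>p\<in>P. s (c u p) (q (fst p) u (snd p)) else 0)"
      using T(1) by (simp add: sum.delta)
    finally show ?thesis .
  qed
  ultimately show ?thesis by (simp add: g_def sum_subtractf)
qed

lemma pmod_scaled_coordinate:
  assumes pm: "pmod s Q q" and "t \<le> i" and "c \<noteq> 0 \<Longrightarrow> fst p \<le> t \<and> snd p \<in> Q (fst p)"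
  shows "s c (q (fst p) t (snd p)) \<in> Q t"
    and "q t i (s c (q (fst p) t (snd p))) = s c (q (fst p) i (snd p))"
proof -
  interpret module s using pm by (simp add: pmod_def)
  interpret Q: diagram Q q by (rule pmod_diagram[OF pm])
  have "s c (q (fst p) t (snd p)) \<in> Q t \<and>
      q t i (s c (q (fst p) t (snd p))) = s c (q (fst p) i (snd p))"
  proof (cases "c = 0")
    case True
    with assms(2) show ?thesis by (simp add: Q.map_zero)
  next
    case False
    with assms(3) have p: "fst p \<le> t" "snd p \<in> Q (fst p)" by auto
    then have in_Q: "q (fst p) t (snd p) \<in> Q t" by (rule Q.map_in)
    with pm have "s c (q (fst p) t (snd p)) \<in> Q t" by (simp add: pmod_def subspace_scale)
    moreover have "q t i (s c (q (fst p) t (snd p))) = s c (q t i (q (fst p) t (snd p)))"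
      using assms(2) in_Q by (rule pmod_map_scale[OF pm])
    ultimately show ?thesis using assms(2) p by (simp add: Q.map_comp)
  qed
  then show "s c (q (fst p) t (snd p)) \<in> Q t"
    and "q t i (s c (q (fst p) t (snd p))) = s c (q (fst p) i (snd p))" by simp_all
qed

text \<open>After pushing \<open>x\<close> down, its coordinates are the sums of the coordinates of the \<open>x\<^sub>t\<close>,
  which are those of the vanishing cocone sum in the free module \<open>Q(i)\<close>.\<close>

lemma free_pmod_latching_mono:
  fixes s :: "'r::comm_ring_1 \<Rightarrow> 'q::ab_group_add \<Rightarrow> 'q"
  assumes free: "free_pmod s Q q"
  shows "latching_mono Q q i"
  unfolding latching_mono_iff
proof (intro ballI impI)
  fix x assume x: "x \<in> dsum Q {t. t < i}" and x0: "cocone q i x = 0"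
  have pm: "pmod s Q q" using free by (simp add: free_pmod_def)
  interpret module s using pm by (simp add: pmod_def)
  interpret Q: diagram Q q by (rule pmod_diagram[OF pm])
  obtain X where X: "\<And>i. X i \<subseteq> Q i"
    and coords: "\<And>j y. y \<in> Q j \<Longrightarrow> \<exists>c. finite {p. c p \<noteq> 0}
      \<and> (\<forall>p. c p \<noteq> 0 \<longrightarrow> fst p \<le> j \<and> snd p \<in> X (fst p))
      \<and> y = (\<Sum>p | c p \<noteq> 0. s (c p) (q (fst p) j (snd p)))"
    and unique: "\<And>j I c p. finite I \<Longrightarrow> (\<And>p. p \<in> I \<Longrightarrow> fst p \<le> j \<and> snd p \<in> X (fst p)) \<Longrightarrow>
      (\<Sum>p\<in>I. s (c p) (q (fst p) j (snd p))) = 0 \<Longrightarrow> p \<in> I \<Longrightarrow> c p = 0"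
    by (rule free_pmod_coordinates[OF free]) blast
  define T where "T = {t. x t \<noteq> 0}"
  have T: "finite T" "\<And>t. t \<in> T \<Longrightarrow> t < i" and x_in: "\<And>t. x t \<in> Q t"
    using x by (auto simp: dsum_def T_def)
  obtain c P where P: "finite P"
    and c_supp: "\<And>t p. t \<in> T \<Longrightarrow> c t p \<noteq> 0 \<Longrightarrow> fst p \<le> t \<and> snd p \<in> X (fst p)"
    and P_T: "\<And>p. p \<in> P \<Longrightarrow> \<exists>t\<in>T. c t p \<noteq> 0"
    and x_P: "\<And>t. t \<in> T \<Longrightarrow> x t = (\<Sum>p\<in>P. s (c t p) (q (fst p) t (snd p)))"
    by (rule common_coordinates[where B = "\<lambda>t p. fst p \<le> t \<and> snd p \<in> X (fst p)"
        and \<beta> = "\<lambda>t p. q (fst p) t (snd p)", OF T(1) coords[OF x_in]]) blast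
  have c_Q: "fst p \<le> t \<and> snd p \<in> Q (fst p)" if "t \<in> T" "c t p \<noteq> 0" for t p
    using c_supp[OF that] X by blast
  have P_le: "fst p \<le> i \<and> snd p \<in> X (fst p)" if "p \<in> P" for p
  proof -
    from P_T[OF that] obtain t where t: "t \<in> T" "c t p \<noteq> 0" by blast
    with c_supp[OF t] less_imp_le[OF T(2)[OF t(1)]] show ?thesis by (auto intro: order.trans)
  qed
  have coeff: "(\<Sum>t\<in>T. c t p) = 0" if "p \<in> P" for p
  proof (rule unique[OF P P_le _ that])
    have "0 = (\<Sum>t\<in>T. q t i (x t))" using x0 by (simp add: cocone_def T_def)
    also have "\<dots> = (\<Sum>t\<in>T. \<Sum>p\<in>P. s (c t p) (q (fst p) i (snd p)))"
    proof (intro sum.cong refl)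
      fix t assume t: "t \<in> T"
      note transport = pmod_scaled_coordinate[OF pm less_imp_le[OF T(2)[OF t]] c_Q[OF t]]
      show "q t i (x t) = (\<Sum>p\<in>P. s (c t p) (q (fst p) i (snd p)))"
        using T(2)[OF t] by (simp add: x_P[OF t] Q.map_sum transport less_imp_le)
    qed
    also have "\<dots> = (\<Sum>p\<in>P. s (\<Sum>t\<in>T. c t p) (q (fst p) i (snd p)))"
      by (simp add: sum.swap[of _ T] scale_sum_left)
    finally show "(\<Sum>p\<in>P. s (\<Sum>t\<in>T. c t p) (q (fst p) i (snd p))) = 0" by simp
  qed
  have "(\<lambda>u. (\<Sum>p\<in>P. if u = fst p then s (\<Sum>t\<in>T. c t p) (snd p) else 0)
      - (if u \<in> T then \<Sum>p\<in>P. s (c u p) (q (fst p) u (snd p)) else 0)) \<in> colim_rel Q q {t. t < i}"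
  proof (rule pmod_colim_rel_push_down[OF pm T(1) _ P])
    show "T \<subseteq> {t. t < i}" using T(2) by blast
    show "fst p \<le> t \<and> fst p \<in> {t. t < i} \<and> snd p \<in> Q (fst p)" if "t \<in> T" "c t p \<noteq> 0" for t p
      using c_Q[OF that] T(2)[OF that(1)] by (auto dest: le_less_trans)
  qed
  moreover have "(\<Sum>p\<in>P. if u = fst p then s (\<Sum>t\<in>T. c t p) (snd p) else 0) = 0" for u
    by (rule sum.neutral) (simp add: coeff)
  moreover have "(if u \<in> T then \<Sum>p\<in>P. s (c u p) (q (fst p) u (snd p)) else 0) = x u" for u
    using x_P[of u] by (cases "u \<in> T") (simp_all add: T_def)
  ultimately have "(\<lambda>u. - x u) \<in> colim_rel Q q {t. t < i}" by simp
  from Q.colim_rel_uminus[OF this] show "x \<in> colim_rel Q q {t. t < i}" by simp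
qed

section \<open>Kernels of epimorphisms of diagrams\<close>

definition kernel_diagram :: "('p \<Rightarrow> 'q \<Rightarrow> 'b::zero) \<Rightarrow> ('p \<Rightarrow> 'q set) \<Rightarrow> 'p \<Rightarrow> 'q set" where
  "kernel_diagram \<pi> Q i = {x \<in> Q i. \<pi> i x = 0}"

locale diagram_epi = Q: diagram Q q + F: diagram F g
  for Q :: "'p::order \<Rightarrow> 'q::ab_group_add set" and q
    and F :: "'p \<Rightarrow> 'b::ab_group_add set" and g +
  fixes \<pi> :: "'p \<Rightarrow> 'q \<Rightarrow> 'b"
  assumes epi_in: "x \<in> Q i \<Longrightarrow> \<pi> i x \<in> F i"
    and epi_add: "x \<in> Q i \<Longrightarrow> y \<in> Q i \<Longrightarrow> \<pi> i (x + y) = \<pi> i x + \<pi> i y"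
    and epi_natural: "i \<le> j \<Longrightarrow> x \<in> Q i \<Longrightarrow> \<pi> j (q i j x) = g i j (\<pi> i x)"
    and epi_surj: "c \<in> F i \<Longrightarrow> \<exists>x\<in>Q i. \<pi> i x = c"
begin

lemma epi_zero: "\<pi> i 0 = 0"
  using epi_add[of 0 i 0] by simp

lemma epi_diff: "x \<in> Q i \<Longrightarrow> y \<in> Q i \<Longrightarrow> \<pi> i (x - y) = \<pi> i x - \<pi> i y"
  using epi_add[of "x - y" i y] by (simp add: Q.diff_in)

lemma epi_uminus: "x \<in> Q i \<Longrightarrow> \<pi> i (- x) = - \<pi> i x"
  using epi_diff[of 0 i x] by (simp add: epi_zero)

lemma epi_gen:
  assumes "x \<in> Q t" and "k \<le> j" and "a \<in> Q k"
  shows "\<pi> t (x + (if t = k then a else 0) - (if t = j then q k j a else 0))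
    = \<pi> t x + (if t = k then \<pi> k a else 0) - (if t = j then g k j (\<pi> k a) else 0)"
  using assms by (auto simp: epi_diff epi_add epi_zero epi_natural Q.add_in Q.map_in)

lemma diagram_kernel: "diagram (kernel_diagram \<pi> Q) q"
  by unfold_locales
    (auto simp: kernel_diagram_def epi_zero epi_add epi_uminus epi_natural F.map_zero
      intro: Q.add_in Q.uminus_in Q.map_in Q.map_add Q.map_id Q.map_comp)

lemma colim_rel_map:
  assumes "x \<in> colim_rel Q q A"
  shows "(\<lambda>t. \<pi> t (x t)) \<in> colim_rel F g A"
  using assms
proof (induction rule: colim_rel.induct)
  case zero
  then show ?case by (simp add: epi_zero colim_rel.zero)
next
  case (step x k j a)
  have x_in: "x t \<in> Q t" for t
    using Q.colim_rel_dsum step.hyps(1) by (auto simp: dsum_def)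
  with step.hyps have "\<pi> t (x t + (if t = k then a else 0) - (if t = j then q k j a else 0))
      = \<pi> t (x t) + (if t = k then \<pi> k a else 0) - (if t = j then g k j (\<pi> k a) else 0)" for t
    by (intro epi_gen) auto
  with colim_rel.step[OF step.IH step.hyps(2-4) epi_in[OF step.hyps(5)]] show ?case by simp
qed

lemma colim_rel_lift:
  assumes "y \<in> colim_rel F g A"
  obtains x where "x \<in> colim_rel Q q A" and "\<And>t. \<pi> t (x t) = y t"
proof -
  from assms have "\<exists>x\<in>colim_rel Q q A. \<forall>t. \<pi> t (x t) = y t"
  proof (induction rule: colim_rel.induct)
    case zero
    then show ?case by (intro bexI[of _ "\<lambda>_. 0"]) (simp_all add: epi_zero colim_rel.zero)
  next
    case (step y k j c)
    then obtain x where x: "x \<in> colim_rel Q q A" "\<And>t. \<pi> t (x t) = y t" by blast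
    obtain b where b: "b \<in> Q k" "\<pi> k b = c" using epi_surj[OF step.hyps(5)] by blast
    let ?x = "\<lambda>t. x t + (if t = k then b else 0) - (if t = j then q k j b else 0)"
    have x'_rel: "?x \<in> colim_rel Q q A" using x(1) step.hyps b(1) by (intro colim_rel.step)
    have "x t \<in> Q t" for t
      using Q.colim_rel_dsum x(1) by (auto simp: dsum_def)
    with step.hyps b x(2)
    have "\<forall>t. \<pi> t (?x t) = y t + (if t = k then c else 0) - (if t = j then g k j c else 0)"
      by (subst epi_gen) auto
    with x'_rel show ?case by (intro bexI[of _ ?x])
  qed
  then show thesis using that by blast
qed

lemma kernel_subset: "kernel_diagram \<pi> Q i \<subseteq> Q i"
  by (auto simp: kernel_diagram_def)

lemma dsum_lift:
  assumes "y \<in> dsum F A"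
  obtains x where "x \<in> dsum Q A" and "\<And>t. \<pi> t (x t) = y t"
proof -
  have "\<exists>b. b \<in> Q t \<and> \<pi> t b = y t \<and> (y t = 0 \<longrightarrow> b = 0)" for t
  proof (cases "y t = 0")
    case True
    then show ?thesis by (intro exI[of _ 0]) (simp add: epi_zero)
  next
    case False
    from assms have "y t \<in> F t" by (simp add: dsum_def)
    with False show ?thesis using epi_surj by blast
  qed
  then have "\<forall>t. \<exists>b. b \<in> Q t \<and> \<pi> t b = y t \<and> (y t = 0 \<longrightarrow> b = 0)" by blast
  then obtain x where x: "\<forall>t. x t \<in> Q t \<and> \<pi> t (x t) = y t \<and> (y t = 0 \<longrightarrow> x t = 0)"
    unfolding choice_iff by blast
  then have "{t. x t \<noteq> 0} \<subseteq> {t. y t \<noteq> 0}" by auto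
  with assms x have "x \<in> dsum Q A"
    by (auto simp: dsum_def intro: finite_subset)
  with x show thesis using that by blast
qed

text \<open>The image in \<open>F\<close> vanishes at \<open>m\<close>, so by latching injectivity it is a relation below \<open>m\<close>;
  subtracting a lift of it leaves a kernel-valued element over \<open>P\<^sub>\<le>\<^sub>m\<close> with vanishing cocone
  sum, which is a relation of the kernel.\<close>

lemma colim_rel_kernel_split:
  assumes lat: "latching_mono F g m" and x: "x \<in> colim_rel Q q {t. t \<le> m}"
    and xm: "x m \<in> kernel_diagram \<pi> Q m"
  obtains z y where "z \<in> colim_rel (kernel_diagram \<pi> Q) q {t. t \<le> m}"
    and "y \<in> colim_rel Q q {t. t < m}" and "\<And>t. x t = z t + y t"
proof -
  interpret K: diagram "kernel_diagram \<pi> Q" q by (rule diagram_kernel)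
  have "\<pi> m (x m) = 0" using xm by (simp add: kernel_diagram_def)
  with colim_rel_map[OF x] have "(\<lambda>t. \<pi> t (x t)) \<in> colim_rel F g {t. t < m}"
    using F.latching_mono_colim_rel_less[OF lat] by simp
  then obtain y where y: "y \<in> colim_rel Q q {t. t < m}" and \<pi>y: "\<And>t. \<pi> t (y t) = \<pi> t (x t)"
    using colim_rel_lift by blast
  define z where "z t = x t - y t" for t
  have "y \<in> colim_rel Q q {t. t \<le> m}" by (rule Q.colim_rel_mono[OF y]) auto
  with x have z_rel: "z \<in> colim_rel Q q {t. t \<le> m}"
    unfolding z_def by (rule Q.colim_rel_diff)
  have "x t \<in> Q t" "y t \<in> Q t" for t
    using x y Q.colim_rel_dsum by (auto simp: dsum_def)
  then have "z t \<in> kernel_diagram \<pi> Q t" for t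
    using \<pi>y by (simp add: z_def kernel_diagram_def epi_diff Q.diff_in)
  moreover have "z \<in> dsum Q {t. t \<le> m}"
    using z_rel Q.colim_rel_dsum by blast
  ultimately have "z \<in> dsum (kernel_diagram \<pi> Q) {t. t \<le> m}"
    by (simp add: dsum_def)
  then have "z \<in> colim_rel (kernel_diagram \<pi> Q) q {t. t \<le> m}"
    using Q.cocone_colim_rel[OF z_rel] by (rule K.colim_rel_of_cocone_eq_0)
  moreover have "x t = z t + y t" for t by (simp add: z_def)
  ultimately show thesis using y that by blast
qed

lemma colim_rel_kernel:
  fixes d :: "'p \<Rightarrow> nat"
  assumes filt: "filtration d" and down: "\<And>l u. l \<in> D \<Longrightarrow> u \<le> l \<Longrightarrow> u \<in> D"
    and lat: "\<And>l. l \<in> D \<Longrightarrow> latching_mono F g l"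
    and x: "x \<in> colim_rel Q q D" and x_ker: "\<And>t. x t \<in> kernel_diagram \<pi> Q t"
  shows "x \<in> colim_rel (kernel_diagram \<pi> Q) q D"
proof -
  interpret K: diagram "kernel_diagram \<pi> Q" q by (rule diagram_kernel)
  have "x \<in> colim_rel (kernel_diagram \<pi> Q) q D"
    if "gens_on Q gs D" "gens_sum q gs = x" "\<forall>t. x t \<in> kernel_diagram \<pi> Q t" for gs x
    using that
  proof (induction gs arbitrary: x rule: gens_top_target_induct[where d = d and D = "{}"])
    case (base gs)
    then have "gs = []" by (simp add: gens_tgts_def)
    with base.prems(2) show ?case by (auto intro: colim_rel.zero)
  next
    case (step gs m)
    have "\<not> m < l" if "l \<in> gens_tgts gs" for l
      using step.hyps(2)[of l] that filtration_less[OF filt, of m l] by auto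
    then obtain top rest where top: "top \<in> colim_rel Q q {t. t \<le> m}"
      and rest: "gens_on Q rest D" "gens_tgts rest = gens_tgts gs - {m}" "gens_sum q rest m = 0"
      and split: "\<And>t. gens_sum q gs t = top t + gens_sum q rest t"
      using Q.gens_split_target[OF step.prems(1)] by metis
    have "m \<in> D" using step.hyps(1) gens_tgts_subset[OF step.prems(1)] by blast
    have "top m \<in> kernel_diagram \<pi> Q m"
      using split[of m] rest(3) step.prems(2) step.prems(3)[rule_format, of m] by simp
    then obtain z y where z: "z \<in> colim_rel (kernel_diagram \<pi> Q) q {t. t \<le> m}"
      and y: "y \<in> colim_rel Q q {t. t < m}" and top_zy: "\<And>t. top t = z t + y t"
      by (rule colim_rel_kernel_split[OF lat[OF \<open>m \<in> D\<close>] top]) blast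
    have z_D: "z \<in> colim_rel (kernel_diagram \<pi> Q) q D"
      by (rule K.colim_rel_mono[OF z]) (use down \<open>m \<in> D\<close> in auto)
    obtain ys where ys: "gens_on Q ys {t. t < m}" "y = gens_sum q ys"
      using y Q.colim_rel_iff_gens by blast
    have "gens_tgts (ys @ rest) \<subseteq> (gens_tgts gs - {m}) \<union> {t. d t < d m}"
      using gens_tgts_subset[OF ys(1)] rest(2) filtration_less[OF filt] by auto
    moreover have "gens_on Q (ys @ rest) D"
      using ys(1) rest(1) down \<open>m \<in> D\<close> by (auto intro: gens_on_mono less_imp_le)
    moreover have "gens_sum q (ys @ rest) = (\<lambda>t. x t - z t)"
      using split top_zy ys(2) step.prems(2) by (auto simp: gens_sum_append)
    moreover have "z \<in> dsum (kernel_diagram \<pi> Q) {t. t \<le> m}"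
      using z K.colim_rel_dsum by blast
    then have "\<forall>t. x t - z t \<in> kernel_diagram \<pi> Q t"
      using step.prems(3) by (auto simp: dsum_def intro: K.diff_in)
    ultimately have "(\<lambda>t. x t - z t) \<in> colim_rel (kernel_diagram \<pi> Q) q D"
      by (rule step.IH[unfolded Diff_empty])
    from K.colim_rel_add[OF z_D this] show ?case by simp
  qed
  moreover obtain gs where "gens_on Q gs D" "x = gens_sum q gs"
    using x Q.colim_rel_iff_gens by blast
  ultimately show ?thesis using x_ker by blast
qed

lemma kernel_latching_mono:
  fixes d :: "'p \<Rightarrow> nat"
  assumes filt: "filtration d" and latQ: "\<And>l. latching_mono Q q l"
    and latF: "\<And>l. latching_mono F g l"
  shows "latching_mono (kernel_diagram \<pi> Q) q i"
  unfolding latching_mono_iff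
proof (intro ballI impI)
  fix x assume x: "x \<in> dsum (kernel_diagram \<pi> Q) {t. t < i}" and x0: "cocone q i x = 0"
  have x_ker: "x t \<in> kernel_diagram \<pi> Q t" for t using x by (simp add: dsum_def)
  have "x \<in> dsum Q {t. t < i}" using x kernel_subset by (auto simp: dsum_def)
  with x0 latQ have "x \<in> colim_rel Q q {t. t < i}" by (simp add: latching_mono_iff)
  show "x \<in> colim_rel (kernel_diagram \<pi> Q) q {t. t < i}"
    by (rule colim_rel_kernel[OF filt _ latF \<open>x \<in> colim_rel Q q {t. t < i}\<close> x_ker])
      (auto dest: le_less_trans)
qed

end

section \<open>Colim-acyclicity of free resolutions\<close>

lemma nat_trans_diagram_epi:
  assumes "nat_trans s1 s2 Q q G g \<pi>" and "diagram Q q" and "diagram F g"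
    and "\<And>i. \<pi> i ` Q i = F i"
  shows "diagram_epi Q q F g \<pi>"
proof -
  interpret Q: diagram Q q by fact
  interpret F: diagram F g by fact
  have "\<pi> i x \<in> F i" if "x \<in> Q i" for x i
    using that assms(4)[of i] by blast
  moreover have "\<exists>x\<in>Q i. \<pi> i x = c" if "c \<in> F i" for c i
    using that by (auto simp: assms(4)[of i, symmetric])
  ultimately show ?thesis
    by unfold_locales (use assms(1,4) in \<open>auto simp: nat_trans_def lin_on_def\<close>)
qed

definition syzygy :: "(nat \<Rightarrow> 'p \<Rightarrow> 'q::zero set) \<Rightarrow> (nat \<Rightarrow> 'p \<Rightarrow> 'q \<Rightarrow> 'q) \<Rightarrow> ('p \<Rightarrow> 'q \<Rightarrow> 'm::zero)
    \<Rightarrow> nat \<Rightarrow> 'p \<Rightarrow> 'q set" where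
  "syzygy Q dQ eps m =
     (case m of 0 \<Rightarrow> kernel_diagram eps (Q 0) | Suc k \<Rightarrow> kernel_diagram (dQ k) (Q (Suc k)))"

text \<open>By induction on \<open>m\<close>, all syzygy diagrams have injective latching maps.\<close>

lemma free_resolution_syzygy:
  fixes d :: "'p::order \<Rightarrow> nat" and S :: "'p \<Rightarrow> 'm::ab_group_add set"
    and s' :: "'r::comm_ring_1 \<Rightarrow> 'q::ab_group_add \<Rightarrow> 'q"
  assumes filt: "filtration d" and S: "pmod s S f" and lat: "\<And>i. latching_mono S f i"
    and res: "free_resolution s s' S f Q q dQ eps"
  shows "diagram_epi (Q (Suc m)) (q (Suc m)) (syzygy Q dQ eps m) (q m) (dQ m)"
    and "x \<in> colim_rel (Q m) (q m) UNIV \<Longrightarrow> (\<And>t. x t \<in> syzygy Q dQ eps m t) \<Longrightarrow>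
      x \<in> colim_rel (syzygy Q dQ eps m) (q m) UNIV"
proof -
  have free: "\<And>k. free_pmod s' (Q k) (q k)"
    and nt: "\<And>k. nat_trans s' s' (Q (Suc k)) (q (Suc k)) (Q k) (q k) (dQ k)"
    and nt0: "nat_trans s' s (Q 0) (q 0) S f eps"
    and onto0: "\<And>i. eps i ` Q 0 i = S i"
    and exact0: "\<And>i. {x \<in> Q 0 i. eps i x = 0} = dQ 0 i ` Q 1 i"
    and exact: "\<And>k i. {x \<in> Q (Suc k) i. dQ k i x = 0} = dQ (Suc k) i ` Q (Suc (Suc k)) i"
    using res by (simp_all add: free_resolution_def)
  have Q: "diagram (Q k) (q k)" for k
    using free[of k] pmod_diagram unfolding free_pmod_def by blast
  have latQ: "latching_mono (Q k) (q k) i" for k i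
    by (rule free_pmod_latching_mono[OF free])
  have onto: "dQ k i ` Q (Suc k) i = syzygy Q dQ eps k i" for k i
    using exact0 exact by (cases k) (simp_all add: syzygy_def kernel_diagram_def)
  have epi0: "diagram_epi (Q 0) (q 0) S f eps"
    by (rule nat_trans_diagram_epi[OF nt0 Q pmod_diagram[OF S] onto0])
  have epi: "diagram_epi (Q (Suc k)) (q (Suc k)) (syzygy Q dQ eps k) (q k) (dQ k)"
    if "diagram (syzygy Q dQ eps k) (q k)" for k
    by (rule nat_trans_diagram_epi[OF nt Q that onto])
  have syz: "diagram (syzygy Q dQ eps k) (q k) \<and> (\<forall>i. latching_mono (syzygy Q dQ eps k) (q k) i)"
    for k
  proof (induction k)
    case 0
    interpret E: diagram_epi "Q 0" "q 0" S f eps by (rule epi0)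
    show ?case
      using E.diagram_kernel E.kernel_latching_mono[OF filt latQ lat] by (simp add: syzygy_def)
  next
    case (Suc k)
    interpret E: diagram_epi "Q (Suc k)" "q (Suc k)" "syzygy Q dQ eps k" "q k" "dQ k"
      using Suc epi by blast
    show ?case
      using E.diagram_kernel E.kernel_latching_mono[OF filt latQ] Suc by (simp add: syzygy_def)
  qed
  then show "diagram_epi (Q (Suc m)) (q (Suc m)) (syzygy Q dQ eps m) (q m) (dQ m)"
    using epi by blast
  show "x \<in> colim_rel (syzygy Q dQ eps m) (q m) UNIV"
    if "x \<in> colim_rel (Q m) (q m) UNIV" and "\<And>t. x t \<in> syzygy Q dQ eps m t"
  proof (cases m)
    case 0
    interpret E: diagram_epi "Q 0" "q 0" S f eps by (rule epi0)
    show ?thesis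
      using E.colim_rel_kernel[OF filt _ lat] that 0 by (simp add: syzygy_def)
  next
    case (Suc k)
    interpret E: diagram_epi "Q (Suc k)" "q (Suc k)" "syzygy Q dQ eps k" "q k" "dQ k"
      using syz epi by blast
    show ?thesis
      using E.colim_rel_kernel[OF filt] syz that Suc by (simp add: syzygy_def)
  qed
qed

text \<open>For a cycle \<open>x\<close> modulo relations, \<open>dQ x\<close> is a relation with values in the syzygies, hence
  a relation of the syzygy diagram; subtracting a lift of it to \<open>Q\<^sub>m\<^sub>+\<^sub>1\<close> leaves a pointwise cycle,
  i.e. a pointwise boundary.\<close>

lemma free_resolution_colim_H_zero:
  fixes d :: "'p::order \<Rightarrow> nat" and S :: "'p \<Rightarrow> 'm::ab_group_add set"
    and s' :: "'r::comm_ring_1 \<Rightarrow> 'q::ab_group_add \<Rightarrow> 'q"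
  assumes filt: "filtration d" and S: "pmod s S f" and lat: "\<And>i. latching_mono S f i"
    and res: "free_resolution s s' S f Q q dQ eps" and n: "0 < n"
  shows "colim_H_zero s' Q q dQ n"
proof -
  obtain m where m: "n = Suc m" using n by (cases n) auto
  note syz = free_resolution_syzygy[OF filt S lat res]
  interpret E: diagram_epi "Q (Suc m)" "q (Suc m)" "syzygy Q dQ eps m" "q m" "dQ m"
    by (rule syz(1))
  interpret E': diagram_epi "Q (Suc (Suc m))" "q (Suc (Suc m))" "syzygy Q dQ eps (Suc m)"
    "q (Suc m)" "dQ (Suc m)"
    by (rule syz(1))
  show ?thesis
    unfolding colim_H_zero_def m diff_Suc_1
  proof (intro ballI impI)
    fix x assume x: "x \<in> dsum (Q (Suc m)) UNIV"
      and dx: "(\<lambda>i. dQ m i (x i)) \<in> colim_rel (Q m) (q m) UNIV"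
    have x_in: "x t \<in> Q (Suc m) t" for t using x by (simp add: dsum_def)
    have "(\<lambda>i. dQ m i (x i)) \<in> colim_rel (syzygy Q dQ eps m) (q m) UNIV"
      using dx E.epi_in[OF x_in] by (rule syz(2))
    then obtain h where h: "h \<in> colim_rel (Q (Suc m)) (q (Suc m)) UNIV"
      and dh: "\<And>t. dQ m t (h t) = dQ m t (x t)"
      using E.colim_rel_lift by blast
    have h_dsum: "h \<in> dsum (Q (Suc m)) UNIV" using h E.Q.colim_rel_dsum by blast
    define v where "v t = x t - h t" for t
    have "{t. v t \<noteq> 0} \<subseteq> {t. x t \<noteq> 0} \<union> {t. h t \<noteq> 0}" by (auto simp: v_def)
    moreover have "v t \<in> syzygy Q dQ eps (Suc m) t" for t
      using x_in h_dsum dh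
      by (simp add: v_def syzygy_def kernel_diagram_def dsum_def E.epi_diff E.Q.diff_in)
    ultimately have "v \<in> dsum (syzygy Q dQ eps (Suc m)) UNIV"
      using x h_dsum by (auto simp: dsum_def intro: finite_subset)
    then obtain y where y: "y \<in> dsum (Q (Suc (Suc m))) UNIV"
      and dy: "\<And>t. dQ (Suc m) t (y t) = v t"
      using E'.dsum_lift by blast
    have "(\<lambda>i. x i - dQ (Suc m) i (y i)) = h" by (simp add: dy v_def)
    with h y show "\<exists>y\<in>dsum (Q (Suc (Suc m))) UNIV.
        (\<lambda>i. x i - dQ (Suc m) i (y i)) \<in> colim_rel (Q (Suc m)) (q (Suc m)) UNIV"
      by blast
  qed
qed

theorem theoremB:
  fixes s :: "'r::comm_ring_1 \<Rightarrow> 'm::ab_group_add \<Rightarrow> 'm"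
    and S :: "'p::order \<Rightarrow> 'm set"
    and f :: "'p \<Rightarrow> 'p \<Rightarrow> 'm \<Rightarrow> 'm"
    and d :: "'p \<Rightarrow> nat"
  assumes "filtration d"
    and "pmod s S f"
  shows "(reedy_cofibrant (deg0 S) (deg0_map f) \<longleftrightarrow> pseudo_projective S f) \<and>
         (pseudo_projective S f \<longrightarrow>
            (\<forall>(s' :: 'r \<Rightarrow> 'q::ab_group_add \<Rightarrow> 'q) Q q dQ eps.
               free_resolution s s' S f Q q dQ eps \<longrightarrow> (\<forall>n>0. colim_H_zero s' Q q dQ n)))"
proof -
  interpret diagram S f by (rule pmod_diagram[OF assms(2)])
  have latching_iff: "(\<forall>i. latching_mono S f i) \<longleftrightarrow> pseudo_projective S f"
    by (rule latching_iff_pseudo_projective[OF assms(1)])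
  then have "reedy_cofibrant (deg0 S) (deg0_map f) \<longleftrightarrow> pseudo_projective S f"
    by (simp add: reedy_cofibrant_deg0_iff)
  moreover have "colim_H_zero s' Q q dQ n"
    if "pseudo_projective S f" "free_resolution s s' S f Q q dQ eps" "0 < n"
    for s' :: "'r \<Rightarrow> 'q \<Rightarrow> 'q" and Q q dQ eps n
    using free_resolution_colim_H_zero[OF assms _ that(2,3)] latching_iff that(1) by blast
  ultimately show ?thesis by blast
qed

end
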